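(* The parameterised problem $\#\ell\text{-left-BIS}$ (parameterised by $\ell$) is $\#\mathrm{W}[2]$-hard.
   Context: A bipartite graph is given as a triple $G=(U,V,E)$ with $(U,V)$ a partition of the vertices and $E\subseteq U\times V$. An independent set $S$ of $G$ is $\ell$-left if $|S\cap U|=\ell$. The problem $\#\ell\text{-left-BIS}$: given a bipartite graph $G=(U,V,E)$ and a non-negative integer $\ell$ (the parameter), output the number of $\ell$-left independent sets of $G$. For parameterised problems $F,G$: an FPT Turing reduction from $F$ to $G$ is an oracle algorithm for $F$ using an oracle for $G$ that runs in time $f(k)\cdot|x|^c$ on instances $x$ with parameter $k$ (for computable $f$ and constant $c$), such that each oracle query has parameter at most $g(k)$ for some computable $g$. $\#k\text{-DomSet}$: given a graph $G$ and positive integer $k$ (the parameter), output the number of dominating sets of $G$ of size $k$ (a set $D$ is dominating if every vertex is in $D$ or adjacent to a vertex of $D$). A problem is $\#\mathrm{W}[2]$-hard if there is an FPT Turing reduction from $\#k\text{-DomSet}$ to it. *)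

theory Defs
  imports Main
begin

text \<open>Natural numbers in unary (self-delimiting), used inside instance encodings.\<close>
definition un :: "nat \<Rightarrow> bool list" where
  "un n = replicate n True @ [False]"

fun bin :: "nat \<Rightarrow> bool list" where
  "bin n = (if n = 0 then [] else odd n # bin (n div 2))"

record 'a cprob =
  inst :: "'a set"
  enc  :: "'a \<Rightarrow> bool list"
  sol  :: "'a \<Rightarrow> nat"
  par  :: "'a \<Rightarrow> nat"

text \<open>Tape symbols are natural numbers: 0 = blank, 1 = bit False, 2 = bit True.
  A tape is a map from positions (integers) to symbols.\<close>

record otm =
  nstates :: nat
  nsyms   :: nat
  start   :: nat
  halt    :: nat
  qry     :: nat
  ans     :: nat
  delta   :: "nat \<Rightarrow> nat \<Rightarrow> nat \<Rightarrow> nat \<times> nat \<times> int \<times> nat \<times> int"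
  \<comment> \<open>state, work symbol, oracle symbol \<mapsto> new state, written work symbol,
      work head move, written oracle symbol, oracle head move\<close>

definition wf_otm :: "otm \<Rightarrow> bool" where
  "wf_otm M \<longleftrightarrow> 3 \<le> nsyms M \<and>
     start M < nstates M \<and> halt M < nstates M \<and> qry M < nstates M \<and> ans M < nstates M \<and>
     (\<forall>q s r. q < nstates M \<and> s < nsyms M \<and> r < nsyms M \<longrightarrow>
        (case delta M q s r of (q', s', d, r', e) \<Rightarrow>
           q' < nstates M \<and> s' < nsyms M \<and> r' < nsyms M \<and>
           d \<in> {-1, 0, 1} \<and> e \<in> {-1, 0, 1}))"

type_synonym tape = "int \<Rightarrow> nat"
type_synonym config = "nat \<times> tape \<times> int \<times> tape \<times> int"
  \<comment> \<open>state, work tape, work head, oracle tape, oracle head\<close>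

definition tape_of :: "bool list \<Rightarrow> tape" where
  "tape_of w = (\<lambda>i. if 0 \<le> i \<and> nat i < length w then (if w ! nat i then 2 else 1) else 0)"

definition read_tape :: "tape \<Rightarrow> bool list" where
  "read_tape tp = (let n = (LEAST n. tp (int n) \<notin> {1, 2}) in map (\<lambda>i. tp (int i) = 2) [0..<n])"

definition init_config :: "otm \<Rightarrow> bool list \<Rightarrow> config" where
  "init_config M w = (start M, tape_of w, 0, (\<lambda>_. 0), 0)"

definition step :: "(bool list \<Rightarrow> bool list) \<Rightarrow> otm \<Rightarrow> config \<Rightarrow> config" where
  "step orc M c = (case c of (q, wt, h, ot, g) \<Rightarrow>
     if q = halt M then c
     else if q = qry M then (ans M, wt, h, tape_of (orc (read_tape ot)), 0)
     else (case delta M q (wt h) (ot g) of (q', s', d, r', e) \<Rightarrow>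
             (q', wt(h := s'), h + d, ot(g := r'), g + e)))"

definition run :: "(bool list \<Rightarrow> bool list) \<Rightarrow> otm \<Rightarrow> bool list \<Rightarrow> nat \<Rightarrow> config" where
  "run orc M w t = (step orc M ^^ t) (init_config M w)"

definition cstate :: "config \<Rightarrow> nat" where "cstate c = fst c"
definition cwork :: "config \<Rightarrow> tape" where "cwork c = fst (snd c)"
definition coracle :: "config \<Rightarrow> tape" where "coracle c = fst (snd (snd (snd c)))"

definition computable :: "(nat \<Rightarrow> nat) \<Rightarrow> bool" where
  "computable f \<longleftrightarrow> (\<exists>M. wf_otm M \<and> (\<forall>n. \<exists>t.
      cstate (run (\<lambda>_. []) M (bin n) t) = halt M \<and>
      read_tape (cwork (run (\<lambda>_. []) M (bin n) t)) = bin (f n)))"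

text \<open>An oracle for a counting problem Q: answers every encoded instance with the
  (binary encoding of the) correct count; arbitrary on other words.\<close>
definition is_oracle :: "'b cprob \<Rightarrow> (bool list \<Rightarrow> bool list) \<Rightarrow> bool" where
  "is_oracle Q orc \<longleftrightarrow> (\<forall>y \<in> inst Q. orc (enc Q y) = bin (sol Q y))"

definition fpt_turing_red :: "'a cprob \<Rightarrow> 'b cprob \<Rightarrow> bool" where
  "fpt_turing_red P Q \<longleftrightarrow>
    (\<exists>M f c g. wf_otm M \<and> computable f \<and> computable g \<and>
      (\<forall>orc. is_oracle Q orc \<longrightarrow>
        (\<forall>x \<in> inst P. \<exists>t. t \<le> f (par P x) * length (enc P x) ^ c \<and>
            cstate (run orc M (enc P x) t) = halt M \<and>
            read_tape (cwork (run orc M (enc P x) t)) = bin (sol P x) \<and>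
            (\<forall>i < t. cstate (run orc M (enc P x) i) = qry M \<longrightarrow>
               (\<forall>y \<in> inst Q. read_tape (coracle (run orc M (enc P x) i)) = enc Q y \<longrightarrow>
                  par Q y \<le> g (par P x))))))"

definition is_dominating :: "nat \<Rightarrow> (nat \<times> nat) set \<Rightarrow> nat set \<Rightarrow> bool" where
  "is_dominating n E D \<longleftrightarrow> D \<subseteq> {..<n} \<and> (\<forall>v<n. v \<in> D \<or> (\<exists>u\<in>D. (u, v) \<in> E))"

definition DomSet :: "(nat \<times> (nat \<times> nat) set \<times> nat) cprob" where
  "DomSet = \<lparr> inst = {(n, E, k). E \<subseteq> {..<n} \<times> {..<n} \<and>
                         (\<forall>i j. (i, j) \<in> E \<longrightarrow> (j, i) \<in> E \<and> i \<noteq> j) \<and> 1 \<le> k},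
              enc = (\<lambda>(n, E, k). un n @ un k @
                        map (\<lambda>p. p \<in> E) (List.product [0..<n] [0..<n])),
              sol = (\<lambda>(n, E, k). card {D. is_dominating n E D \<and> card D = k}),
              par = (\<lambda>(n, E, k). k) \<rparr>"

definition bis_U :: "nat \<Rightarrow> (nat + nat) set" where "bis_U a = Inl ` {..<a}"
definition bis_V :: "nat \<Rightarrow> (nat + nat) set" where "bis_V b = Inr ` {..<b}"
definition bis_E :: "(nat \<times> nat) set \<Rightarrow> ((nat + nat) \<times> (nat + nat)) set" where
  "bis_E E = (\<lambda>(i, j). (Inl i, Inr j)) ` E"

definition is_indep :: "nat \<Rightarrow> nat \<Rightarrow> (nat \<times> nat) set \<Rightarrow> (nat + nat) set \<Rightarrow> bool" where
  "is_indep a b E S \<longleftrightarrow> S \<subseteq> bis_U a \<union> bis_V b \<and>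
     (\<forall>u\<in>S. \<forall>v\<in>S. (u, v) \<notin> bis_E E)"

definition LeftBIS :: "(nat \<times> nat \<times> (nat \<times> nat) set \<times> nat) cprob" where
  "LeftBIS = \<lparr> inst = {(a, b, E, l). E \<subseteq> {..<a} \<times> {..<b}},
               enc = (\<lambda>(a, b, E, l). un a @ un b @ un l @
                        map (\<lambda>p. p \<in> E) (List.product [0..<a] [0..<b])),
               sol = (\<lambda>(a, b, E, l). card {S. is_indep a b E S \<and> card (S \<inter> bis_U a) = l}),
               par = (\<lambda>(a, b, E, l). l) \<rparr>"

definition sharpW2_hard :: "'b cprob \<Rightarrow> bool" where
  "sharpW2_hard Q \<longleftrightarrow> fpt_turing_red DomSet Q"

end

theory Submission
  imports Defs
begin

text \<open>A graph G = ({..<n}, E) is sent to the bipartite graph G' with left side {..<n}, right side n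
  copies of {..<n}, and left vertex i adjacent to the copies of its closed neighbourhood. The
  right vertices with no neighbour in a k-set A of left vertices are exactly the copies of the
  vertices that A leaves undominated, so G' has the sum over all k-sets A of 2^(n * u(A)) k-left
  independent sets, where u(A) counts the vertices undominated by A. Modulo 2^n only the
  dominating sets survive, each contributing 1, and since k \<ge> 1 there are fewer than 2^n of
  them; hence the number of dominating k-sets of G is the number of k-left independent sets of G'
  modulo 2^n. The reduction machine writes G' with parameter k on its oracle tape, makes this
  single query and outputs the lowest n bits of the answer, in time polynomial in the input
  length.\<close>

section \<open>Binary words\<close>

declare bin.simps[simp del]

lemma bin_0 [simp]: "bin 0 = []"
  by (simp add: bin.simps)

lemma bin_pos: "c > 0 \<Longrightarrow> bin c = odd c # bin (c div 2)"
  by (simp add: bin.simps)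

lemma bin_eq_Nil_iff [simp]: "bin c = [] \<longleftrightarrow> c = 0"
  by (cases "c = 0") (auto simp: bin_pos)

definition strip_zeros :: "bool list \<Rightarrow> bool list" where
  "strip_zeros xs = rev (dropWhile (\<lambda>b. \<not> b) (rev xs))"

lemma strip_zeros_Nil [simp]: "strip_zeros [] = []"
  by (simp add: strip_zeros_def)

lemma strip_zeros_Cons:
  "strip_zeros (b # xs) = (if strip_zeros xs = [] \<and> \<not> b then [] else b # strip_zeros xs)"
  by (auto simp: strip_zeros_def dropWhile_append)

lemma bin_mod_power2: "bin (c mod 2 ^ n) = strip_zeros (take n (bin c))"
proof (induction n arbitrary: c)
  case 0
  then show ?case by simp
next
  case (Suc n)
  show ?case
  proof (cases "c = 0")
    case False
    let ?x = "c mod 2 ^ Suc n"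
    have odd_x: "odd ?x = odd c"
      by (simp add: mod_mod_cancel odd_iff_mod_2_eq_one)
    have half_x: "?x div 2 = (c div 2) mod 2 ^ n"
      by (simp add: mod_mult2_eq div_mult2_eq mult.commute)
    have x: "?x = (if odd c then 1 else 0) + 2 * ((c div 2) mod 2 ^ n)"
      by (smt (verit, best) half_x mod_div_mult_eq mult.commute odd_iff_mod_2_eq_one odd_x
          add.commute even_iff_mod_2_eq_zero)
    have "bin ?x = (if ?x = 0 then [] else odd c # bin ((c div 2) mod 2 ^ n))"
      using bin.simps[of ?x] unfolding odd_x half_x .
    also have "\<dots> = strip_zeros (odd c # take n (bin (c div 2)))"
      using Suc.IH[of "c div 2"] x by (auto simp: strip_zeros_Cons)
    finally show ?thesis
      using False by (simp add: bin_pos)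
  qed simp
qed

lemma strip_zeros_append:
  "xs = strip_zeros xs @ replicate (length xs - length (strip_zeros xs)) False"
proof -
  have "rev xs = takeWhile (\<lambda>b. \<not> b) (rev xs) @ dropWhile (\<lambda>b. \<not> b) (rev xs)"
    by simp
  moreover have "takeWhile (\<lambda>b. \<not> b) (rev xs) =
      replicate (length (takeWhile (\<lambda>b. \<not> b) (rev xs))) False"
    by (metis (mono_tags, lifting) replicate_length_same set_takeWhileD)
  ultimately have "xs = strip_zeros xs @ replicate (length (takeWhile (\<lambda>b. \<not> b) (rev xs))) False"
    unfolding strip_zeros_def by (metis rev_append rev_replicate rev_rev_ident)
  then show ?thesis
    by (metis add_diff_cancel_left' length_append length_replicate)
qed

lemma last_strip_zeros: "strip_zeros xs \<noteq> [] \<Longrightarrow> last (strip_zeros xs)"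
  unfolding strip_zeros_def by (metis hd_dropWhile last_rev rev_is_Nil_conv)

lemma length_strip_zeros: "length (strip_zeros xs) \<le> length xs"
  by (metis le_add1 length_append strip_zeros_append)

lemma nth_strip_zeros: "i < length (strip_zeros xs) \<Longrightarrow> strip_zeros xs ! i = xs ! i"
  by (metis nth_append strip_zeros_append)

lemma length_un [simp]: "length (un a) = Suc a"
  by (simp add: un_def)

lemma nth_un_append:
  "(un a @ xs) ! j = (if j < a then True else if j = a then False else xs ! (j - Suc a))"
  by (simp add: un_def nth_append)

lemma un_append_inj: "un a @ xs = un b @ ys \<Longrightarrow> a = b \<and> xs = ys"
proof (induction a arbitrary: b)
  case 0
  then show ?case by (cases b) (auto simp: un_def)
next
  case (Suc a)
  then show ?case by (cases b) (auto simp: un_def)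
qed

lemma nth_matrix_enc:
  assumes "t < a * b"
  shows "map (\<lambda>p. p \<in> F) (List.product [0..<a] [0..<b]) ! t = ((t div b, t mod b) \<in> F)"
proof -
  have "0 < b"
    using assms by (auto intro: gr0I)
  then have "t div b < a" and "t mod b < b"
    using assms by (simp_all add: less_mult_imp_div_less)
  then show ?thesis
    using assms product_nth[of t "[0..<a]" "[0..<b]"] by simp
qed

section \<open>Counting dominating sets by left independent sets\<close>

text \<open>Right vertex j < n * n stands for copy j div n of vertex j mod n.\<close>
definition nbhd_copies :: "nat \<Rightarrow> (nat \<times> nat) set \<Rightarrow> (nat \<times> nat) set" where
  "nbhd_copies n E = {(i, j). i < n \<and> j < n * n \<and> (j mod n = i \<or> (i, j mod n) \<in> E)}"

definition undominated :: "nat \<Rightarrow> (nat \<times> nat) set \<Rightarrow> nat set \<Rightarrow> nat set" where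
  "undominated n E A = {v. v < n \<and> v \<notin> A \<and> (\<forall>u\<in>A. (u, v) \<notin> E)}"

definition free_copies :: "nat \<Rightarrow> (nat \<times> nat) set \<Rightarrow> nat set \<Rightarrow> nat set" where
  "free_copies n E A = {j. j < n * n \<and> (\<forall>i\<in>A. (i, j) \<notin> nbhd_copies n E)}"

lemma nbhd_copies_subset: "nbhd_copies n E \<subseteq> {..<n} \<times> {..<n * n}"
  by (auto simp: nbhd_copies_def)

lemma copy_index_lt: "v < n \<Longrightarrow> r < (n::nat) \<Longrightarrow> r * n + v < n * n"
proof -
  assume "v < n" "r < n"
  then have "r * n + v < Suc r * n" by simp
  also have "\<dots> \<le> n * n" using \<open>r < n\<close> by (intro mult_le_mono1) simp
  finally show ?thesis .
qed

lemma inj_on_copy_index: "inj_on (\<lambda>(v, r). r * n + v) ({..<n::nat} \<times> UNIV)"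
proof (rule inj_onI, clarify)
  fix v r v' r' :: nat assume "v < n" "v' < n" and eq: "r * n + v = r' * n + v'"
  then have "v = v'" by (metis mod_mult_self3 mod_less)
  with eq \<open>v < n\<close> show "v = v' \<and> r = r'" by simp
qed

lemma card_free_copies:
  assumes "A \<subseteq> {..<n}"
  shows "card (free_copies n E A) = n * card (undominated n E A)"
proof -
  let ?copy = "\<lambda>(v, r). r * n + v"
  have "free_copies n E A = ?copy ` (undominated n E A \<times> {..<n})"
  proof (intro set_eqI iffI)
    fix j assume j: "j \<in> free_copies n E A"
    then have "j < n * n" and "0 < n"
      by (auto simp: free_copies_def intro: gr0I)
    then have "j mod n \<in> undominated n E A" and "j div n < n"
      using j assms by (auto simp: free_copies_def undominated_def nbhd_copies_def
          less_mult_imp_div_less)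
    then show "j \<in> ?copy ` (undominated n E A \<times> {..<n})"
      by (intro image_eqI[of _ _ "(j mod n, j div n)"]) auto
  next
    fix j assume "j \<in> ?copy ` (undominated n E A \<times> {..<n})"
    then obtain v r where "v \<in> undominated n E A" "r < n" "j = r * n + v"
      by auto
    moreover from this have "v < n"
      by (simp add: undominated_def)
    ultimately show "j \<in> free_copies n E A"
      by (auto simp: free_copies_def undominated_def nbhd_copies_def copy_index_lt)
  qed
  moreover have "inj_on ?copy (undominated n E A \<times> {..<n})"
    by (rule inj_on_subset[OF inj_on_copy_index]) (auto simp: undominated_def)
  ultimately show ?thesis
    by (simp add: card_image card_cartesian_product undominated_def)
qed

lemma left_indep_sets_nbhd_copies:
  "{S. is_indep n (n * n) (nbhd_copies n E) S \<and> card (S \<inter> bis_U n) = k} =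
   (\<lambda>(A, T). Inl ` A \<union> Inr ` T) ` (SIGMA A:{A. A \<subseteq> {..<n} \<and> card A = k}. Pow (free_copies n E A))"
proof (intro set_eqI iffI)
  fix S assume S: "S \<in> {S. is_indep n (n * n) (nbhd_copies n E) S \<and> card (S \<inter> bis_U n) = k}"
  define A where "A = {i. Inl i \<in> S}"
  define T where "T = {j. Inr j \<in> S}"
  have S_eq: "S = Inl ` A \<union> Inr ` T"
  proof (intro set_eqI iffI)
    fix x assume "x \<in> S"
    then show "x \<in> Inl ` A \<union> Inr ` T"
      by (cases x) (auto simp: A_def T_def)
  qed (auto simp: A_def T_def)
  have sub: "S \<subseteq> bis_U n \<union> bis_V (n * n)"
    and no_edge: "\<forall>u\<in>S. \<forall>v\<in>S. (u, v) \<notin> bis_E (nbhd_copies n E)"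
    using S by (auto simp: is_indep_def)
  have A_sub: "A \<subseteq> {..<n}" and T_sub: "T \<subseteq> {..<n * n}"
    using sub by (auto simp: A_def T_def bis_U_def bis_V_def)
  have "S \<inter> bis_U n = Inl ` A"
    using A_sub by (auto simp: S_eq bis_U_def)
  then have "card A = k"
    using S by (simp add: card_image)
  moreover have "T \<subseteq> free_copies n E A"
  proof
    fix j assume "j \<in> T"
    have "(i, j) \<notin> nbhd_copies n E" if "i \<in> A" for i
    proof
      assume "(i, j) \<in> nbhd_copies n E"
      then have "(Inl i, Inr j) \<in> bis_E (nbhd_copies n E)"
        by (force simp: bis_E_def)
      with no_edge \<open>i \<in> A\<close> \<open>j \<in> T\<close> show False
        by (auto simp: A_def T_def)
    qed
    with \<open>j \<in> T\<close> T_sub show "j \<in> free_copies n E A"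
      by (auto simp: free_copies_def)
  qed
  ultimately show "S \<in> (\<lambda>(A, T). Inl ` A \<union> Inr ` T) `
      (SIGMA A:{A. A \<subseteq> {..<n} \<and> card A = k}. Pow (free_copies n E A))"
    using A_sub S_eq by blast
next
  fix S assume "S \<in> (\<lambda>(A, T). Inl ` A \<union> Inr ` T) `
      (SIGMA A:{A. A \<subseteq> {..<n} \<and> card A = k}. Pow (free_copies n E A))"
  then obtain A T where A: "A \<subseteq> {..<n}" "card A = k" and T: "T \<subseteq> free_copies n E A"
    and S: "S = Inl ` A \<union> Inr ` T"
    by auto
  have "S \<inter> bis_U n = Inl ` A"
    using A by (auto simp: S bis_U_def)
  moreover have "S \<subseteq> bis_U n \<union> bis_V (n * n)"
    using A T S by (auto simp: bis_U_def bis_V_def free_copies_def)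
  moreover have "\<forall>u\<in>S. \<forall>v\<in>S. (u, v) \<notin> bis_E (nbhd_copies n E)"
    using T S by (auto simp: bis_E_def free_copies_def)
  ultimately show "S \<in> {S. is_indep n (n * n) (nbhd_copies n E) S \<and> card (S \<inter> bis_U n) = k}"
    using A by (simp add: is_indep_def card_image)
qed

lemma card_left_indep_sets_nbhd_copies:
  "card {S. is_indep n (n * n) (nbhd_copies n E) S \<and> card (S \<inter> bis_U n) = k} =
   (\<Sum>A | A \<subseteq> {..<n} \<and> card A = k. 2 ^ (n * card (undominated n E A)))"
proof -
  let ?I = "{A. A \<subseteq> {..<n} \<and> card A = k}"
  have "inj_on (\<lambda>(A, T). Inl ` A \<union> Inr ` T) (SIGMA A:?I. Pow (free_copies n E A))"
  proof (rule inj_onI, clarify)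
    fix A T A' T' :: "nat set" assume "Inl ` A \<union> Inr ` T = Inl ` A' \<union> Inr ` T'"
    then have "Inl -` (Inl ` A \<union> Inr ` T) = Inl -` (Inl ` A' \<union> Inr ` T')"
      and "Inr -` (Inl ` A \<union> Inr ` T) = Inr -` (Inl ` A' \<union> Inr ` T')"
      by simp_all
    then show "A = A' \<and> T = T'"
      by (auto simp: vimage_Un)
  qed
  then have "card {S. is_indep n (n * n) (nbhd_copies n E) S \<and> card (S \<inter> bis_U n) = k} =
      card (SIGMA A:?I. Pow (free_copies n E A))"
    unfolding left_indep_sets_nbhd_copies by (rule card_image)
  also have "\<dots> = (\<Sum>A\<in>?I. card (Pow (free_copies n E A)))"
    by (rule card_SigmaI) (auto intro: finite_subset[of _ "Pow {..<n}"] simp: free_copies_def)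
  also have "\<dots> = (\<Sum>A\<in>?I. 2 ^ (n * card (undominated n E A)))"
    by (rule sum.cong) (auto simp: card_Pow free_copies_def card_free_copies[symmetric])
  finally show ?thesis .
qed

lemma card_dominating_sets_eq_mod:
  assumes "1 \<le> k"
  shows "card {D. is_dominating n E D \<and> card D = k} =
    card {S. is_indep n (n * n) (nbhd_copies n E) S \<and> card (S \<inter> bis_U n) = k} mod 2 ^ n"
proof -
  let ?I = "{A. A \<subseteq> {..<n} \<and> card A = k}"
  let ?dom = "\<lambda>A. undominated n E A = {}"
  have dominating_eq: "{D. is_dominating n E D \<and> card D = k} = {A \<in> ?I. ?dom A}"
    by (auto simp: is_dominating_def undominated_def)
  have summand_mod: "(2::nat) ^ (n * card (undominated n E A)) mod 2 ^ n =
      (if ?dom A then 1 else 0) mod 2 ^ n" for A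
  proof (cases "?dom A")
    case False
    then have "1 \<le> card (undominated n E A)"
      by (simp add: Suc_leI card_gt_0_iff undominated_def)
    then have "(2::nat) ^ n dvd 2 ^ (n * card (undominated n E A))"
      by (simp add: le_imp_power_dvd)
    with False show ?thesis by simp
  qed simp
  have "card {A \<in> ?I. ?dom A} < 2 ^ n"
  proof -
    have "{A \<in> ?I. ?dom A} \<subseteq> Pow {..<n} - {{}}"
      using assms by auto
    then have "card {A \<in> ?I. ?dom A} \<le> card (Pow {..<n} - {{}})"
      by (rule card_mono[rotated]) simp
    also have "\<dots> = 2 ^ n - 1"
      by (simp add: card_Pow)
    finally
    show ?thesis by (simp add: order_le_less_trans[of _ "2 ^ n - 1"])
  qed
  then have "card {A \<in> ?I. ?dom A} = (\<Sum>A\<in>?I. if ?dom A then 1 else 0) mod 2 ^ n"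
    by (simp add: sum.If_cases Int_def conj_assoc)
  also have "\<dots> = (\<Sum>A\<in>?I. (if ?dom A then 1 else 0) mod 2 ^ n) mod 2 ^ n"
    by (simp only: mod_sum_eq)
  also have "\<dots> = (\<Sum>A\<in>?I. (2::nat) ^ (n * card (undominated n E A))) mod 2 ^ n"
    by (simp only: summand_mod[symmetric] mod_sum_eq)
  finally show ?thesis
    using dominating_eq card_left_indep_sets_nbhd_copies by simp
qed

section \<open>Tapes and query-free runs of oracle machines\<close>

definition bit_sym :: "bool \<Rightarrow> nat" where
  "bit_sym b = (if b then 2 else 1)"

lemma tape_of_nth: "tape_of w = (\<lambda>i. if 0 \<le> i \<and> nat i < length w then bit_sym (w ! nat i) else 0)"
  by (simp add: tape_of_def bit_sym_def fun_eq_iff)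

lemma read_tape_eq:
  assumes "\<And>i. i < length w \<Longrightarrow> tp (int i) = bit_sym (w ! i)" and "tp (int (length w)) \<notin> {1, 2}"
  shows "read_tape tp = w"
proof -
  have "(LEAST n. tp (int n) \<notin> {1, 2}) = length w"
  proof (rule Least_equality)
    fix y assume "tp (int y) \<notin> {1, 2}"
    then show "length w \<le> y"
      using assms(1)[of y] by (cases "length w \<le> y") (auto simp: bit_sym_def split: if_splits)
  qed fact
  then show ?thesis
    unfolding read_tape_def Let_def by (intro nth_equalityI) (auto simp: assms(1) bit_sym_def)
qed

lemma read_tape_tape_of [simp]: "read_tape (tape_of w) = w"
  by (rule read_tape_eq) (auto simp: tape_of_nth)

definition reaches :: "otm \<Rightarrow> (bool list \<Rightarrow> bool list) \<Rightarrow> config \<Rightarrow> nat \<Rightarrow> config \<Rightarrow> bool" where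
  "reaches M orc c t c' \<longleftrightarrow>
     (step orc M ^^ t) c = c' \<and> (\<forall>i<t. cstate ((step orc M ^^ i) c) \<noteq> qry M)"

lemma reaches_0 [simp]: "reaches M orc c 0 c"
  by (simp add: reaches_def)

lemma reaches_trans [trans]:
  assumes "reaches M orc c t1 c'" and "reaches M orc c' t2 c''"
  shows "reaches M orc c (t1 + t2) c''"
proof -
  have split: "(step orc M ^^ (j + t1)) c = (step orc M ^^ j) c'" for j
    using assms(1) by (simp add: reaches_def funpow_add)
  have "(step orc M ^^ (t1 + t2)) c = c''"
    using split[of t2] assms(2) by (simp add: reaches_def add.commute)
  moreover have "cstate ((step orc M ^^ i) c) \<noteq> qry M" if "i < t1 + t2" for i
  proof (cases "i < t1")
    case False
    then show ?thesis
      using split[of "i - t1"] assms(2) \<open>i < t1 + t2\<close> by (simp add: reaches_def)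
  qed (use assms(1) in \<open>simp add: reaches_def\<close>)
  ultimately show ?thesis
    by (simp add: reaches_def)
qed

lemma reaches_snoc:
  "reaches M orc c t c' \<Longrightarrow> cstate c' \<noteq> qry M \<Longrightarrow> reaches M orc c (Suc t) (step orc M c')"
  unfolding reaches_def by (auto simp: less_Suc_eq)

lemma step_ordinary:
  "q \<noteq> qry M \<Longrightarrow> q \<noteq> halt M \<Longrightarrow>
   step orc M (q, wt, h, ot, g) = (case delta M q (wt h) (ot g) of (q', s', d, r', e) \<Rightarrow>
     (q', wt(h := s'), h + d, ot(g := r'), g + e))"
  by (simp add: step_def)

lemma reaches_step:
  assumes "q \<noteq> qry M" "q \<noteq> halt M" "delta M q (wt h) (ot g) = (q', s', d, r', e)"
    and "wt' = wt(h := s')" "h' = h + d" "ot' = ot(g := r')" "g' = g + e"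
  shows "reaches M orc (q, wt, h, ot, g) 1 (q', wt', h', ot', g')"
proof -
  have "reaches M orc (q, wt, h, ot, g) (Suc 0) (step orc M (q, wt, h, ot, g))"
    by (rule reaches_snoc) (simp_all add: cstate_def assms)
  then show ?thesis
    using assms by (simp add: step_ordinary)
qed

lemma scan_right_rewrite:
  assumes q: "q \<noteq> qry M" "q \<noteq> halt M" and cells: "\<forall>j<m. wt (h + int j) \<in> P"
    and delta: "\<And>s r. s \<in> P \<Longrightarrow> delta M q s r = (q, \<phi> s, 1, r, 0)"
  shows "reaches M orc (q, wt, h, ot, g) m
    (q, \<lambda>x. if h \<le> x \<and> x < h + int m then \<phi> (wt x) else wt x, h + int m, ot, g)"
  using cells
proof (induction m)
  case (Suc m)
  let ?wt = "\<lambda>m x. if h \<le> x \<and> x < h + int m then \<phi> (wt x) else wt x"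
  have "reaches M orc (q, wt, h, ot, g) (Suc m) (step orc M (q, ?wt m, h + int m, ot, g))"
    using Suc by (intro reaches_snoc) (simp_all add: cstate_def q)
  moreover have "step orc M (q, ?wt m, h + int m, ot, g) = (q, ?wt (Suc m), h + int (Suc m), ot, g)"
    using q delta Suc.prems by (auto simp: step_ordinary algebra_simps fun_eq_iff)
  ultimately show ?case by simp
qed (simp add: reaches_def fun_eq_iff)

lemma scan_right:
  assumes "q \<noteq> qry M" "q \<noteq> halt M" "\<forall>j<m. wt (h + int j) \<in> P"
    and "\<And>s r. s \<in> P \<Longrightarrow> delta M q s r = (q, s, 1, r, 0)"
  shows "reaches M orc (q, wt, h, ot, g) m (q, wt, h + int m, ot, g)"
proof -
  have "reaches M orc (q, wt, h, ot, g) m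
      (q, \<lambda>x. if h \<le> x \<and> x < h + int m then id (wt x) else wt x, h + int m, ot, g)"
    by (rule scan_right_rewrite) (use assms in auto)
  then show ?thesis
    by (simp only: id_apply if_cancel)
qed

lemma scan_left_rewrite:
  assumes q: "q \<noteq> qry M" "q \<noteq> halt M" and cells: "\<forall>j<m. wt (h - int j) \<in> P"
    and delta: "\<And>s r. s \<in> P \<Longrightarrow> delta M q s r = (q, \<phi> s, -1, r, 0)"
  shows "reaches M orc (q, wt, h, ot, g) m
    (q, \<lambda>x. if h - int m < x \<and> x \<le> h then \<phi> (wt x) else wt x, h - int m, ot, g)"
  using cells
proof (induction m)
  case (Suc m)
  let ?wt = "\<lambda>m x. if h - int m < x \<and> x \<le> h then \<phi> (wt x) else wt x"
  have "reaches M orc (q, wt, h, ot, g) (Suc m) (step orc M (q, ?wt m, h - int m, ot, g))"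
    using Suc by (intro reaches_snoc) (simp_all add: cstate_def q)
  moreover have "step orc M (q, ?wt m, h - int m, ot, g) = (q, ?wt (Suc m), h - int (Suc m), ot, g)"
    using q delta Suc.prems by (auto simp: step_ordinary algebra_simps fun_eq_iff)
  ultimately show ?case by simp
qed (simp add: reaches_def fun_eq_iff)

lemma scan_left:
  assumes "q \<noteq> qry M" "q \<noteq> halt M" "\<forall>j<m. wt (h - int j) \<in> P"
    and "\<And>s r. s \<in> P \<Longrightarrow> delta M q s r = (q, s, -1, r, 0)"
  shows "reaches M orc (q, wt, h, ot, g) m (q, wt, h - int m, ot, g)"
proof -
  have "reaches M orc (q, wt, h, ot, g) m
      (q, \<lambda>x. if h - int m < x \<and> x \<le> h then id (wt x) else wt x, h - int m, ot, g)"
    by (rule scan_left_rewrite) (use assms in auto)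
  then show ?thesis
    by (simp only: id_apply if_cancel)
qed

lemma scan_right_emit:
  assumes q: "q \<noteq> qry M" "q \<noteq> halt M" and cells: "\<forall>j<m. wt (h + int j) \<in> P"
    and delta: "\<And>s r. s \<in> P \<Longrightarrow> delta M q s r = (q, s, 1, \<chi> s, 1)"
  shows "reaches M orc (q, wt, h, ot, g) m
    (q, wt, h + int m, \<lambda>x. if g \<le> x \<and> x < g + int m then \<chi> (wt (h + (x - g))) else ot x, g + int m)"
  using cells
proof (induction m)
  case (Suc m)
  let ?ot = "\<lambda>m x. if g \<le> x \<and> x < g + int m then \<chi> (wt (h + (x - g))) else ot x"
  have "reaches M orc (q, wt, h, ot, g) (Suc m) (step orc M (q, wt, h + int m, ?ot m, g + int m))"
    using Suc by (intro reaches_snoc) (simp_all add: cstate_def q)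
  moreover have "step orc M (q, wt, h + int m, ?ot m, g + int m) =
      (q, wt, h + int (Suc m), ?ot (Suc m), g + int (Suc m))"
    using q delta Suc.prems by (auto simp: step_ordinary algebra_simps fun_eq_iff)
  ultimately show ?case by simp
qed (simp add: reaches_def fun_eq_iff)

lemma scan_right_copy:
  assumes q: "q \<noteq> qry M" "q \<noteq> halt M"
    and cells: "\<forall>j<m. wt (h + int j) \<in> P \<and> ot (g + int j) \<in> R"
    and delta: "\<And>s r. s \<in> P \<Longrightarrow> r \<in> R \<Longrightarrow> delta M q s r = (q, r, 1, r, 1)"
  shows "reaches M orc (q, wt, h, ot, g) m
    (q, \<lambda>x. if h \<le> x \<and> x < h + int m then ot (g + (x - h)) else wt x, h + int m, ot, g + int m)"
  using cells
proof (induction m)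
  case (Suc m)
  let ?wt = "\<lambda>m x. if h \<le> x \<and> x < h + int m then ot (g + (x - h)) else wt x"
  have "reaches M orc (q, wt, h, ot, g) (Suc m) (step orc M (q, ?wt m, h + int m, ot, g + int m))"
    using Suc by (intro reaches_snoc) (simp_all add: cstate_def q)
  moreover have "step orc M (q, ?wt m, h + int m, ot, g + int m) =
      (q, ?wt (Suc m), h + int (Suc m), ot, g + int (Suc m))"
    using q delta Suc.prems by (auto simp: step_ordinary algebra_simps fun_eq_iff)
  ultimately show ?case by simp
qed (simp add: reaches_def fun_eq_iff)

lemma rewind_to_blank:
  assumes q: "q \<noteq> qry M" "q \<noteq> halt M"
    and delta: "\<And>s r. s \<noteq> 0 \<Longrightarrow> delta M q s r = (q, s, -1, r, 0)"
      "\<And>r. delta M q 0 r = (q', 0, 1, r, 0)"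
    and "wt (-1) = 0" "-1 \<le> h" and nonblank: "\<And>x. 0 \<le> x \<Longrightarrow> x \<le> h \<Longrightarrow> wt x \<noteq> 0"
  shows "reaches M orc (q, wt, h, ot, g) (nat (h + 1) + 1) (q', wt, 0, ot, g)"
proof -
  have "reaches M orc (q, wt, h, ot, g) (nat (h + 1)) (q, wt, h - int (nat (h + 1)), ot, g)"
    by (rule scan_left[where P = "{s. s \<noteq> 0}"]) (use q delta nonblank \<open>-1 \<le> h\<close> in auto)
  moreover have "delta M q (wt (-1)) (ot g) = (q', 0, 1, ot g, 0)"
    using delta \<open>wt (-1) = 0\<close> by simp
  then have "reaches M orc (q, wt, -1, ot, g) 1 (q', wt, 0, ot, g)"
    by (rule reaches_step[OF q]) (simp_all add: fun_upd_idem \<open>wt (-1) = 0\<close>)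
  ultimately show ?thesis
    using \<open>-1 \<le> h\<close> reaches_trans by fastforce
qed

lemma reaches_through_query:
  assumes "reaches M orc c0 t1 c1" "cstate c1 = qry M" "reaches M orc (step orc M c1) t2 c2"
  shows "(step orc M ^^ (t1 + 1 + t2)) c0 = c2"
    and "\<forall>i < t1 + 1 + t2. cstate ((step orc M ^^ i) c0) = qry M \<longrightarrow> (step orc M ^^ i) c0 = c1"
proof -
  have after: "(step orc M ^^ (t1 + 1 + j)) c0 = (step orc M ^^ j) (step orc M c1)" for j
  proof -
    have "t1 + 1 + j = j + Suc t1"
      by simp
    then have "(step orc M ^^ (t1 + 1 + j)) c0 =
        (step orc M ^^ j) (step orc M ((step orc M ^^ t1) c0))"
      by (simp only: funpow_add comp_apply funpow.simps(2))
    then show ?thesis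
      using assms(1) by (simp add: reaches_def)
  qed
  show "(step orc M ^^ (t1 + 1 + t2)) c0 = c2"
    using after[of t2] assms(3) by (simp add: reaches_def)
  show "\<forall>i < t1 + 1 + t2. cstate ((step orc M ^^ i) c0) = qry M \<longrightarrow> (step orc M ^^ i) c0 = c1"
  proof (intro allI impI)
    fix i assume "i < t1 + 1 + t2" "cstate ((step orc M ^^ i) c0) = qry M"
    moreover have "i = t1 + 1 + (i - t1 - 1)" if "t1 < i"
      using that by simp
    ultimately show "(step orc M ^^ i) c0 = c1"
      using assms(1,3) after[of "i - t1 - 1"] unfolding reaches_def
      by (cases "i < t1"; cases "i = t1") auto
  qed
qed

section \<open>The reduction machine\<close>

declare fun_upd_idem [simp]

text \<open>On the input un n @ un k @ matrix the two separators
  become 4 and 3, and consumed matrix bits become 5. The first n cells hold marks for the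
  vertices while row i is processed: 11 (i itself) and 2 (other vertices) before the matrix entry
  of the vertex is read, then 12 (i itself), 8 (neighbour of i) or 7 (non-neighbour). Each
  emitted copy of the row upgrades one further mark to 13, 10 or 9, so these count the copies
  written so far.

  States 0--6 write un n @ un (n * n) @ un k on the oracle tape; 8--14 read row i of the
  adjacency matrix; 15--18 emit the n copies of the closed neighbourhood row of i; 19--21 reset
  the marks for row i + 1; 7 and 22 rewind; 23 queries. From 24 on, the first n bits of the
  answer are copied over the first n cells, and 25 erases trailing zeros before halting in 26.\<close>

definition emitted_bit :: "nat \<Rightarrow> nat" where
  "emitted_bit s = (if s \<in> {8, 10, 12, 13} then 2 else 1)"

definition red_delta :: "nat \<Rightarrow> nat \<Rightarrow> nat \<Rightarrow> nat \<times> nat \<times> int \<times> nat \<times> int" where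
  "red_delta q s r = (
    if q = 0 then (if s = 2 then (1, 11, 1, 2, 1) else if s = 1 then (2, 4, 1, 1, 1)
                   else (26, 0, 0, 0, 0))
    else if q = 1 then (if s = 2 then (1, 2, 1, 2, 1) else if s = 1 then (2, 4, 1, 1, 1)
                        else (26, 0, 0, 0, 0))
    else if q = 2 then (if s = 2 then (2, 2, 1, r, 0) else if s = 1 then (3, 3, 1, r, 0)
                        else (26, 0, 0, 0, 0))
    else if q = 3 then (if s \<in> {1, 2} then (3, s, 1, 2, 1) else if s = 0 then (4, 0, -1, 1, 1)
                        else (26, 0, 0, 0, 0))
    else if q = 4 then (if s \<in> {1, 2} then (4, s, -1, r, 0) else if s = 3 then (5, 3, -1, r, 0)
                        else (26, 0, 0, 0, 0))
    else if q = 5 then (if s = 2 then (5, 2, -1, r, 0) else if s = 4 then (6, 4, 1, r, 0)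
                        else (26, 0, 0, 0, 0))
    else if q = 6 then (if s = 2 then (6, 2, 1, 2, 1) else if s = 3 then (7, 3, -1, 1, 1)
                        else (26, 0, 0, 0, 0))
    else if q = 7 then (if s \<noteq> 0 then (7, s, -1, r, 0) else (8, 0, 1, r, 0))
    else if q = 8 then (if s \<in> {7, 8, 12} then (8, s, 1, r, 0)
                        else if s \<in> {2, 11} then (9, s, 1, r, 0)
                        else if s = 4 then (15, 4, -1, r, 0) else (26, 0, 0, 0, 0))
    else if q = 9 then (if s \<noteq> 3 then (9, s, 1, r, 0) else (10, 3, 1, r, 0))
    else if q = 10 then (if s = 5 then (10, 5, 1, r, 0) else if s = 1 then (11, 5, -1, r, 0)
                         else if s = 2 then (12, 5, -1, r, 0) else (26, 0, 0, 0, 0))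
    else if q = 11 \<or> q = 12 then (if s \<noteq> 0 then (q, s, -1, r, 0) else (q + 2, 0, 1, r, 0))
    else if q = 13 \<or> q = 14 then (if s \<in> {7, 8, 12} then (q, s, 1, r, 0)
                                  else if s = 2 then (8, if q = 13 then 7 else 8, 1, r, 0)
                                  else if s = 11 then (8, 12, 1, r, 0) else (26, 0, 0, 0, 0))
    else if q = 15 then (if s \<in> {9, 10, 13} then (15, s, -1, r, 0)
                         else if s \<in> {7, 8, 12} then (16, s, -1, r, 0)
                         else if s = 0 then (19, 0, 1, r, 0) else (26, 0, 0, 0, 0))
    else if q = 16 then (if s \<noteq> 0 then (16, s, -1, r, 0) else (17, 0, 1, r, 0))
    else if q = 17 then (if s \<in> {9, 10, 13} then (17, s, 1, emitted_bit s, 1)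
                         else if s \<in> {7, 8, 12}
                           then (18, s + 2 - (if s = 12 then 1 else 0), 1, emitted_bit s, 1)
                         else (26, 0, 0, 0, 0))
    else if q = 18 then (if s \<in> {7, 8, 9, 10, 12, 13} then (18, s, 1, emitted_bit s, 1)
                         else if s = 4 then (15, 4, -1, r, 0) else (26, 0, 0, 0, 0))
    else if q = 19 then (if s \<in> {9, 10} then (19, 2, 1, r, 0) else if s = 13 then (20, 2, 1, r, 0)
                         else if s = 4 then (22, 4, -1, r, 0) else (26, 0, 0, 0, 0))
    else if q = 20 then (if s \<in> {9, 10} then (21, 11, 1, r, 0) else if s = 4 then (22, 4, -1, r, 0)
                         else (26, 0, 0, 0, 0))
    else if q = 21 then (if s \<in> {9, 10} then (21, 2, 1, r, 0) else if s = 4 then (7, 4, -1, r, 0)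
                         else (26, 0, 0, 0, 0))
    else if q = 22 then (if s = 2 then (22, 2, -1, r, 0) else if s = 0 then (23, 0, 1, r, 0)
                         else (26, 0, 0, 0, 0))
    else if q = 24 then (if s = 2 \<and> r \<in> {1, 2} then (24, r, 1, r, 1) else (25, 0, -1, r, 0))
    else if q = 25 then (if s = 1 then (25, 0, -1, r, 0) else (26, s, 0, r, 0))
    else (26, 0, 0, 0, 0))"

definition red_machine :: otm where
  "red_machine =
    \<lparr>nstates = 27, nsyms = 14, start = 0, halt = 26, qry = 23, ans = 24, delta = red_delta\<rparr>"

lemma red_machine_simps [simp]:
  "nstates red_machine = 27" "nsyms red_machine = 14" "start red_machine = 0"
  "halt red_machine = 26" "qry red_machine = 23" "ans red_machine = 24"
  "delta red_machine = red_delta"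
  by (simp_all add: red_machine_def)

lemma red_delta_wf:
  "case red_delta q s r of (q', s', d, r', e) \<Rightarrow>
     q' < 27 \<and> (s < 14 \<longrightarrow> s' < 14) \<and> (r < 14 \<longrightarrow> r' < 14) \<and> d \<in> {-1, 0, 1} \<and> e \<in> {-1, 0, 1}"
  unfolding red_delta_def emitted_bit_def by (simp split del: if_split) (simp split: if_split)

lemma wf_red_machine: "wf_otm red_machine"
proof -
  have "case red_delta q s r of (q', s', d, r', e) \<Rightarrow>
      q' < 27 \<and> s' < 14 \<and> r' < 14 \<and> d \<in> {-1, 0, 1} \<and> e \<in> {-1, 0, 1}"
    if "s < 14" "r < 14" for q s r
    using red_delta_wf[where q = q and s = s and r = r] that by (auto split: prod.splits)
  then show ?thesis
    by (simp add: wf_otm_def)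
qed

locale reduction_run =
  fixes n :: nat and k :: nat and E :: "(nat \<times> nat) set" and orc :: "bool list \<Rightarrow> bool list"
begin

abbreviation reach where "reach \<equiv> reaches red_machine orc"

lemma reach_step:
  assumes "q \<noteq> 23" "q \<noteq> 26" "red_delta q (wt h) (ot g) = (q', s', d, r', e)"
    and "wt' = wt(h := s')" "h' = h + d" "ot' = ot(g := r')" "g' = g + e"
  shows "reach (q, wt, h, ot, g) 1 (q', wt', h', ot', g')"
  using assms by (intro reaches_step) simp_all

abbreviation N where "N \<equiv> int n"
abbreviation K where "K \<equiv> int k"

definition input_bit :: "nat \<Rightarrow> nat" where "input_bit j = bit_sym ((j div n, j mod n) \<in> E)"

text \<open>The work tape: vertex marks R, first separator a, k ones, second separator b, c consumed
  matrix bits and the rest of the matrix.\<close>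
definition work :: "nat \<Rightarrow> nat \<Rightarrow> (nat \<Rightarrow> nat) \<Rightarrow> nat \<Rightarrow> int \<Rightarrow> nat" where
  "work a b R c x = (if x < 0 then 0 else if x < N then R (nat x) else if x = N then a
     else if x \<le> N + K then 2 else if x = N + K + 1 then b else if x < N + K + 2 + int c then 5
     else if x < N + K + 2 + N * N then input_bit (nat (x - (N + K + 2))) else 0)"

definition closed_nbhd :: "nat \<Rightarrow> nat \<Rightarrow> bool" where "closed_nbhd i v \<longleftrightarrow> v = i \<or> (i, v) \<in> E"

text \<open>The mark of vertex v while row i is processed, after f entries of the row have been read and
  p copies of it emitted.\<close>
definition mark :: "nat \<Rightarrow> nat \<Rightarrow> nat \<Rightarrow> nat \<Rightarrow> nat" where
  "mark i f p v = (if v < f then (if v = i then (if v < p then 13 else 12)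
      else if closed_nbhd i v then (if v < p then 10 else 8) else (if v < p then 9 else 7))
     else (if v = i then 11 else 2))"

definition mat_start :: nat where "mat_start = n + n * n + k + 3"

definition copies_bit :: "nat \<Rightarrow> nat" where
  "copies_bit t = bit_sym (closed_nbhd (t div (n * n)) (t mod n))"

text \<open>The query word, symbol by symbol; the oracle tape always holds one of its prefixes.\<close>
definition query_sym :: "nat \<Rightarrow> nat" where
  "query_sym j = (if j < n then 2 else if j = n then 1
     else if j \<le> n + n * n then 2 else if j = n + n * n + 1 then 1
     else if j < n + n * n + k + 2 then 2 else if j = n + n * n + k + 2 then 1
     else copies_bit (j - mat_start))"

definition query_prefix :: "nat \<Rightarrow> int \<Rightarrow> nat" where
  "query_prefix w x = (if 0 \<le> x \<and> x < int w then query_sym (nat x) else 0)"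

lemma input_bit_12: "input_bit j \<in> {1, 2}" by (simp add: input_bit_def bit_sym_def)
lemma input_bit_nz[simp]: "input_bit j \<noteq> 0" by (simp add: input_bit_def bit_sym_def)
lemma input_bit_pos[simp]: "0 < input_bit j" by (simp add: input_bit_def bit_sym_def)

lemma work_neg[simp]: "x < 0 \<Longrightarrow> work a b R c x = 0" by (simp add: work_def)
lemma work_vertex[simp]: "v < n \<Longrightarrow> work a b R c (int v) = R v" by (simp add: work_def)
lemma work_vertex': "0 \<le> x \<Longrightarrow> x < N \<Longrightarrow> work a b R c x = R (nat x)" by (simp add: work_def)
lemma work_sep1[simp]: "work a b R c N = a" by (simp add: work_def)
lemma work_ones: "N < x \<Longrightarrow> x \<le> N + K \<Longrightarrow> work a b R c x = 2" by (simp add: work_def)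
lemma work_sep2[simp]: "work a b R c (N + K + 1) = b" by (simp add: work_def)
lemma work_sep2'[simp]: "work a b R c (N + 1 + K) = b" by (simp add: work_def)
lemma work_consumed: "N + K + 2 \<le> x \<Longrightarrow> x < N + K + 2 + int c \<Longrightarrow> work a b R c x = 5"
  by (simp add: work_def)
lemma work_matrix:
  "N + K + 2 + int c \<le> x \<Longrightarrow> x < N + K + 2 + N * N \<Longrightarrow>
    work a b R c x = input_bit (nat (x - (N + K + 2)))"
  by (simp add: work_def)
lemma work_end: "c \<le> n * n \<Longrightarrow> N + K + 2 + N * N \<le> x \<Longrightarrow> work a b R c x = 0"
proof -
  assume "c \<le> n * n" "N + K + 2 + N * N \<le> x"
  moreover have "int c \<le> N * N" using \<open>c \<le> n * n\<close> by (metis of_nat_le_iff of_nat_mult)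
  ultimately show ?thesis by (simp add: work_def)
qed

lemma work_upd_vertex: "v < n \<Longrightarrow> (work a b R c)(int v := s) = work a b (R(v := s)) c"
  by (auto simp: fun_eq_iff work_def)
lemma work_upd_sep1: "(work a b R c)(N := s) = work s b R c"
  by (auto simp: fun_eq_iff work_def)
lemma work_upd_sep2: "(work a b R c)(N + K + 1 := s) = work a s R c"
  by (auto simp: fun_eq_iff work_def)
lemma work_upd_consume: "c < n * n \<Longrightarrow> (work a b R c)(N + K + 2 + int c := 5) = work a b R (Suc c)"
  by (auto simp: fun_eq_iff work_def)
lemma work_cong: "(\<And>v. v < n \<Longrightarrow> R v = R' v) \<Longrightarrow> work a b R c = work a b R' c"
  by (auto simp: fun_eq_iff work_def)

lemma work_nz:
  "a \<noteq> 0 \<Longrightarrow> b \<noteq> 0 \<Longrightarrow> (\<And>v. v < n \<Longrightarrow> R v \<noteq> 0) \<Longrightarrow> 0 \<le> x \<Longrightarrow>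
    x < N + K + 2 + N * N \<Longrightarrow> work a b R c x \<noteq> 0"
  by (auto simp: work_def)

lemma query_prefix_extend:
  assumes "\<And>j. j < m \<Longrightarrow> F (int w + int j) = query_sym (w + j)"
  shows "(\<lambda>x. if int w \<le> x \<and> x < int w + int m then F x else query_prefix w x) =
    query_prefix (w + m)"
proof (rule ext)
  fix x
  show "(if int w \<le> x \<and> x < int w + int m then F x else query_prefix w x) = query_prefix (w + m) x"
  proof (cases "int w \<le> x \<and> x < int w + int m")
    case True
    define j where "j = nat (x - int w)"
    have x: "x = int w + int j" "j < m" using True by (auto simp: j_def)
    then show ?thesis using assms[of j] by (simp add: query_prefix_def nat_add_distrib)
  next
    case False then show ?thesis by (auto simp: query_prefix_def)
  qed
qed

lemma query_prefix_upd: "query_sym w = s \<Longrightarrow> (query_prefix w)(int w := s) = query_prefix (Suc w)"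
  by (auto simp: fun_eq_iff query_prefix_def)

lemma query_sym_n_ones: "j < n \<Longrightarrow> query_sym j = 2" by (simp add: query_sym_def)
lemma query_sym_sep1: "query_sym n = 1" by (simp add: query_sym_def)
lemma query_sym_nn_ones: "n < j \<Longrightarrow> j \<le> n + n * n \<Longrightarrow> query_sym j = 2" by (simp add: query_sym_def)
lemma query_sym_sep2: "query_sym (n + n * n + 1) = 1" by (simp add: query_sym_def)
lemma query_sym_k_ones: "n + n * n + 1 < j \<Longrightarrow> j < n + n * n + k + 2 \<Longrightarrow> query_sym j = 2"
  by (simp add: query_sym_def)
lemma query_sym_sep3: "query_sym (n + n * n + k + 2) = 1" by (simp add: query_sym_def)
lemma query_sym_copies: "query_sym (mat_start + t) = copies_bit t"
  by (simp add: query_sym_def mat_start_def)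

lemma mark_000: "mark 0 0 0 v = (if v = 0 then 11 else 2)"
  by (simp add: mark_def)

lemma int_nn: "int (n * n) = N * N"
  by simp

lemma work_matrix_bit: "c \<le> j \<Longrightarrow> j < n * n \<Longrightarrow> work a b R c (N + K + 2 + int j) \<in> {1, 2}"
proof -
  assume "c \<le> j" "j < n * n"
  then have "int j < N * N"
    by (metis int_nn of_nat_less_iff)
  with \<open>c \<le> j\<close> show ?thesis
    using input_bit_12 by (simp add: work_matrix)
qed

lemma emit_query:
  assumes "q \<noteq> 23" "q \<noteq> 26"
    and cells: "\<forall>j<m. wt (h + int j) \<in> P \<and> \<chi> (wt (h + int j)) = query_sym (w + j)"
    and "\<And>s r. s \<in> P \<Longrightarrow> red_delta q s r = (q, s, 1, \<chi> s, 1)"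
  shows "reach (q, wt, h, query_prefix w, int w) m
    (q, wt, h + int m, query_prefix (w + m), int (w + m))"
proof -
  have "reach (q, wt, h, query_prefix w, int w) m (q, wt, h + int m,
      \<lambda>x. if int w \<le> x \<and> x < int w + int m then \<chi> (wt (h + (x - int w))) else query_prefix w x,
      int w + int m)"
    by (rule scan_right_emit[where P = P]) (use assms in auto)
  moreover have "(\<lambda>x. if int w \<le> x \<and> x < int w + int m then \<chi> (wt (h + (x - int w)))
      else query_prefix w x) = query_prefix (w + m)"
    by (rule query_prefix_extend) (use cells in simp)
  ultimately show ?thesis
    by simp
qed

lemma write_unary_n:
  "reach (0, work 1 1 (\<lambda>_. 2) 0, 0, query_prefix 0, 0) (n + 1)
     (2, work 4 1 (mark 0 0 0) 0, N + 1, query_prefix (n + 1), N + 1)"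
proof (cases "n = 0")
  case True
  have "reach (0, work 1 1 (\<lambda>_. 2) 0, 0, query_prefix 0, 0) 1
      (2, work 4 1 (mark 0 0 0) 0, N + 1, query_prefix (n + 1), N + 1)"
  proof (rule reach_step)
    show "red_delta 0 (work 1 1 (\<lambda>_. 2) 0 0) (query_prefix 0 0) = (2, 4, 1, 1, 1)"
      using True work_sep1[of 1 1 "\<lambda>_. 2" 0] by (simp add: red_delta_def)
    show "work 4 1 (mark 0 0 0) 0 = (work 1 1 (\<lambda>_. 2) 0)(0 := 4)"
      using True work_upd_sep1[of 1 1 "\<lambda>_. 2" 0 4] work_cong[of "\<lambda>_. 2" "mark 0 0 0" 4 1 0] by simp
    have "query_sym 0 = 1"
      unfolding query_sym_def using True by simp
    then show "query_prefix (n + 1) = (query_prefix 0)(0 := 1)"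
      using True query_prefix_upd[of 0 1] by simp
  qed (use True in simp_all)
  then show ?thesis
    using True by simp
next
  case False
  define W where "W = work 1 1 (mark 0 0 0) 0"
  have "reach (0, work 1 1 (\<lambda>_. 2) 0, 0, query_prefix 0, 0) 1 (1, W, 1, query_prefix 1, 1)"
  proof (rule reach_step)
    show "red_delta 0 (work 1 1 (\<lambda>_. 2) 0 0) (query_prefix 0 0) = (1, 11, 1, 2, 1)"
      using False work_vertex[of 0] by (simp add: red_delta_def)
    show "W = (work 1 1 (\<lambda>_. 2) 0)(0 := 11)"
      using False work_upd_vertex[of 0 1 1 "\<lambda>_. 2" 0 11]
      by (simp add: W_def) (rule work_cong, simp add: mark_000)
    show "query_prefix 1 = (query_prefix 0)(0 := 2)"
      using False query_prefix_upd[of 0 2] by (simp add: query_sym_n_ones)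
  qed simp_all
  also have "reach (1, W, 1, query_prefix 1, 1) (n - 1) (1, W, N, query_prefix n, N)"
  proof -
    have "reach (1, W, 1, query_prefix 1, int 1) (n - 1)
        (1, W, 1 + int (n - 1), query_prefix (1 + (n - 1)), int (1 + (n - 1)))"
      by (rule emit_query[where P = "{2}" and \<chi> = "\<lambda>_. 2"])
        (auto simp: red_delta_def W_def mark_000 work_vertex' query_sym_n_ones)
    then show ?thesis
      using False by simp
  qed
  also have "reach (1, W, N, query_prefix n, N) 1
      (2, work 4 1 (mark 0 0 0) 0, N + 1, query_prefix (n + 1), N + 1)"
  proof (rule reach_step)
    show "red_delta 1 (W N) (query_prefix n N) = (2, 4, 1, 1, 1)"
      by (simp add: red_delta_def W_def)
  qed (simp_all add: W_def work_upd_sep1 query_prefix_upd query_sym_sep1)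
  finally show ?thesis
    using False by simp
qed

lemma write_unary_nn:
  "reach (2, work 4 1 (mark 0 0 0) 0, N + 1, query_prefix (n + 1), N + 1) (k + 1 + n * n + 1)
     (4, work 4 3 (mark 0 0 0) 0, N + K + 1 + N * N, query_prefix (n + n * n + 2),
      int (n + n * n + 2))"
proof -
  define W where "W = work 4 3 (mark 0 0 0) 0"
  have "reach (2, work 4 1 (mark 0 0 0) 0, N + 1, query_prefix (n + 1), N + 1) k
      (2, work 4 1 (mark 0 0 0) 0, N + 1 + K, query_prefix (n + 1), N + 1)"
    by (rule scan_right[where P = "{2}"]) (auto simp: red_delta_def work_ones)
  also have "reach (2, work 4 1 (mark 0 0 0) 0, N + 1 + K, query_prefix (n + 1), N + 1) 1
      (3, W, N + K + 2, query_prefix (n + 1), N + 1)"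
  proof (rule reach_step)
    show "red_delta 2 (work 4 1 (mark 0 0 0) 0 (N + 1 + K)) (query_prefix (n + 1) (N + 1)) =
        (3, 3, 1, query_prefix (n + 1) (N + 1), 0)"
      by (simp add: red_delta_def)
    show "W = (work 4 1 (mark 0 0 0) 0)(N + 1 + K := 3)"
      using work_upd_sep2[of 4 1 "mark 0 0 0" 0 3] by (simp add: W_def add.commute add.left_commute)
  qed simp_all
  also have "reach (3, W, N + K + 2, query_prefix (n + 1), N + 1) (n * n)
      (3, W, N + K + 2 + N * N, query_prefix (n + 1 + n * n), int (n + 1 + n * n))"
  proof -
    have "reach (3, W, N + K + 2, query_prefix (n + 1), int (n + 1)) (n * n)
        (3, W, N + K + 2 + int (n * n), query_prefix (n + 1 + n * n), int (n + 1 + n * n))"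
    proof (rule emit_query[where P = "{1, 2}" and \<chi> = "\<lambda>_. 2"])
      show "\<forall>j<n * n. W (N + K + 2 + int j) \<in> {1, 2} \<and> 2 = query_sym (n + 1 + j)"
        unfolding W_def using work_matrix_bit query_sym_nn_ones by auto
    qed (auto simp: red_delta_def)
    then show ?thesis
      by (simp add: ac_simps)
  qed
  also have "reach (3, W, N + K + 2 + N * N, query_prefix (n + 1 + n * n), int (n + 1 + n * n)) 1
      (4, W, N + K + 1 + N * N, query_prefix (n + n * n + 2), int (n + n * n + 2))"
  proof (rule reach_step)
    show "red_delta 3 (W (N + K + 2 + N * N)) (query_prefix (n + 1 + n * n) (int (n + 1 + n * n))) =
        (4, 0, -1, 1, 1)"
      by (simp add: W_def work_end red_delta_def)
    show "query_prefix (n + n * n + 2) = (query_prefix (n + 1 + n * n))(int (n + 1 + n * n) := 1)"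
      using query_prefix_upd[of "n + 1 + n * n" 1] query_sym_sep2 by (simp add: ac_simps)
  qed (simp_all add: W_def work_end)
  finally show ?thesis
    by (simp add: W_def)
qed

lemma write_unary_k:
  "reach (4, work 4 3 (mark 0 0 0) 0, N + K + 1 + N * N, query_prefix (n + n * n + 2),
      int (n + n * n + 2)) (n * n + 1 + k + 1 + k + 1)
     (7, work 4 3 (mark 0 0 0) 0, N + K, query_prefix mat_start, int mat_start)"
proof -
  define W where "W = work 4 3 (mark 0 0 0) 0"
  define w where "w = n + n * n + 2"
  have "reach (4, W, N + K + 1 + N * N, query_prefix w, int w) (n * n)
      (4, W, N + K + 1, query_prefix w, int w)"
  proof -
    have "reach (4, W, N + K + 1 + N * N, query_prefix w, int w) (n * n)
        (4, W, N + K + 1 + N * N - int (n * n), query_prefix w, int w)"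
    proof (rule scan_left[where P = "{1, 2}"])
      show "\<forall>j<n * n. W (N + K + 1 + N * N - int j) \<in> {1, 2}"
      proof (intro allI impI)
        fix j assume "j < n * n"
        then have "int j < N * N"
          by (metis int_nn of_nat_less_iff)
        then show "W (N + K + 1 + N * N - int j) \<in> {1, 2}"
          using input_bit_12 by (simp add: W_def work_matrix)
      qed
    qed (auto simp: red_delta_def)
    then show ?thesis by simp
  qed
  also have "reach (4, W, N + K + 1, query_prefix w, int w) 1 (5, W, N + K, query_prefix w, int w)"
  proof (rule reach_step)
    show "red_delta 4 (W (N + K + 1)) (query_prefix w (int w)) =
        (5, 3, -1, query_prefix w (int w), 0)"
      by (simp add: W_def red_delta_def)
  qed (simp_all add: W_def)
  also have "reach (5, W, N + K, query_prefix w, int w) k (5, W, N, query_prefix w, int w)"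
  proof -
    have "reach (5, W, N + K, query_prefix w, int w) k (5, W, N + K - K, query_prefix w, int w)"
      by (rule scan_left[where P = "{2}"]) (auto simp: red_delta_def W_def work_ones)
    then show ?thesis by simp
  qed
  also have "reach (5, W, N, query_prefix w, int w) 1 (6, W, N + 1, query_prefix w, int w)"
  proof (rule reach_step)
    show "red_delta 5 (W N) (query_prefix w (int w)) = (6, 4, 1, query_prefix w (int w), 0)"
      by (simp add: W_def red_delta_def)
  qed (simp_all add: W_def)
  also have "reach (6, W, N + 1, query_prefix w, int w) k
      (6, W, N + K + 1, query_prefix (w + k), int (w + k))"
  proof -
    have "reach (6, W, N + 1, query_prefix w, int w) k
        (6, W, N + 1 + K, query_prefix (w + k), int (w + k))"
      by (rule emit_query[where P = "{2}" and \<chi> = "\<lambda>_. 2"])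
        (auto simp: red_delta_def W_def work_ones query_sym_k_ones w_def)
    then show ?thesis
      by (simp add: ac_simps)
  qed
  also have "reach (6, W, N + K + 1, query_prefix (w + k), int (w + k)) 1
      (7, W, N + K, query_prefix mat_start, int mat_start)"
  proof -
    have "mat_start = Suc (w + k)" and "query_sym (w + k) = 1"
      using query_sym_sep3 by (simp_all add: mat_start_def w_def ac_simps)
    then show ?thesis
      using query_prefix_upd[of "w + k" 1]
    proof (intro reach_step)
      show "red_delta 6 (W (N + K + 1)) (query_prefix (w + k) (int (w + k))) = (7, 3, -1, 1, 1)"
        by (simp add: W_def red_delta_def)
    qed (simp_all add: W_def)
  qed
  finally show ?thesis
    by (simp add: W_def w_def)
qed

lemma mark_nz[simp]: "mark i f p v \<noteq> 0" by (simp add: mark_def)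

lemma work_mark_nz: "0 \<le> x \<Longrightarrow> x < N + K + 2 + N * N \<Longrightarrow> work 4 3 (mark i f p) c x \<noteq> 0"
  by (rule work_nz) simp_all

lemma fetch_matrix_bit:
  assumes i: "i < n" and f: "f < n"
  shows "reach (8, work 4 3 (mark i f 0) (i * n + f), int f, ot, g) (n + k - f + (i * n + f) + 3)
    (if (i, f) \<in> E then 12 else 11, work 4 3 (mark i f 0) (Suc (i * n + f)),
     N + K + 1 + int (i * n + f), ot, g)"
proof -
  define c where "c = i * n + f"
  define W where "W = work 4 3 (mark i f 0) c"
  have "c < n * n"
    using copy_index_lt[OF f i] by (simp add: c_def)
  then have "int c < N * N"
    by (metis int_nn of_nat_less_iff)
  have "reach (8, W, int f, ot, g) 1 (9, W, int f + 1, ot, g)"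
  proof (rule reach_step)
    show "red_delta 8 (W (int f)) (ot g) = (9, W (int f), 1, ot g, 0)"
      using f by (simp add: W_def red_delta_def mark_def)
  qed simp_all
  also have "reach (9, W, int f + 1, ot, g) (n + k - f) (9, W, N + K + 1, ot, g)"
  proof -
    have "reach (9, W, int f + 1, ot, g) (n + k - f) (9, W, int f + 1 + int (n + k - f), ot, g)"
    proof (rule scan_right[where P = "{s. s \<noteq> 3}"])
      show "\<forall>j<n + k - f. W (int f + 1 + int j) \<in> {s. s \<noteq> 3}"
      proof (intro allI impI)
        fix j assume j: "j < n + k - f"
        show "W (int f + 1 + int j) \<in> {s. s \<noteq> 3}"
        proof (cases "f + 1 + j < n")
          case True
          have "int f + 1 + int j = int (f + 1 + j)"
            by simp
          then have "W (int f + 1 + int j) = mark i f 0 (f + 1 + j)"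
            by (simp only: W_def work_vertex[OF True])
          then show ?thesis
            by (simp add: mark_def)
        qed (use j in \<open>auto simp: W_def work_def\<close>)
      qed
    qed (auto simp: red_delta_def)
    then show ?thesis
      using f by (simp add: ac_simps)
  qed
  also have "reach (9, W, N + K + 1, ot, g) 1 (10, W, N + K + 2, ot, g)"
  proof (rule reach_step)
    show "red_delta 9 (W (N + K + 1)) (ot g) = (10, 3, 1, ot g, 0)"
      by (simp add: W_def red_delta_def)
  qed (simp_all add: W_def)
  also have "reach (10, W, N + K + 2, ot, g) c (10, W, N + K + 2 + int c, ot, g)"
    by (rule scan_right[where P = "{5}"]) (auto simp: red_delta_def W_def work_consumed)
  also have "reach (10, W, N + K + 2 + int c, ot, g) 1
      (if (i, f) \<in> E then 12 else 11, work 4 3 (mark i f 0) (Suc c), N + K + 1 + int c, ot, g)"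
  proof (rule reach_step)
    have "W (N + K + 2 + int c) = input_bit c"
      using \<open>int c < N * N\<close> by (simp add: W_def work_matrix)
    also have "\<dots> = bit_sym ((i, f) \<in> E)"
      using f by (simp add: input_bit_def c_def)
    finally show "red_delta 10 (W (N + K + 2 + int c)) (ot g) =
        (if (i, f) \<in> E then 12 else 11, 5, -1, ot g, 0)"
      by (simp add: red_delta_def bit_sym_def)
    show "work 4 3 (mark i f 0) (Suc c) = W(N + K + 2 + int c := 5)"
      using work_upd_consume[OF \<open>c < n * n\<close>] by (simp add: W_def)
  qed simp_all
  finally show ?thesis
    unfolding W_def c_def[symmetric] by (rule back_subst[where P = "\<lambda>t. reach _ t _"]) simp
qed

lemma store_matrix_bit:
  assumes i: "i < n" and f: "f < n"
  shows "reach (if (i, f) \<in> E then 12 else 11, work 4 3 (mark i f 0) (Suc (i * n + f)),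
      N + K + 1 + int (i * n + f), ot, g) (n + k + (i * n + f) + 4 + f)
    (8, work 4 3 (mark i (Suc f) 0) (Suc (i * n + f)), int f + 1, ot, g)"
proof -
  define c where "c = i * n + f"
  define W where "W = work 4 3 (mark i f 0) (Suc c)"
  define q where "q = (if (i, f) \<in> E then 12 else 11 :: nat)"
  have "int c < N * N"
    using copy_index_lt[OF f i] by (metis c_def int_nn of_nat_less_iff)
  have "reach (q, W, N + K + 1 + int c, ot, g) (nat (N + K + 1 + int c + 1) + 1)
      (q + 2, W, 0, ot, g)"
  proof (rule rewind_to_blank)
    fix x assume x: "0 \<le> x" "x \<le> N + K + 1 + int c"
    then have "x < N + K + 2 + N * N"
      using \<open>int c < N * N\<close> by simp
    then show "W x \<noteq> 0"
      unfolding W_def using x(1) by (rule work_mark_nz[rotated])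
  qed (auto simp: q_def red_delta_def W_def)
  also have "reach (q + 2, W, 0, ot, g) f (q + 2, W, int f, ot, g)"
  proof -
    have "reach (q + 2, W, 0, ot, g) f (q + 2, W, 0 + int f, ot, g)"
      by (rule scan_right[where P = "{7, 8, 12}"])
        (use f in \<open>auto simp: q_def red_delta_def W_def mark_def\<close>)
    then show ?thesis by simp
  qed
  also have "reach (q + 2, W, int f, ot, g) 1
      (8, work 4 3 (mark i (Suc f) 0) (Suc c), int f + 1, ot, g)"
  proof (rule reach_step)
    define s where "s = (if f = i then 12 else if (i, f) \<in> E then 8 else 7 :: nat)"
    show "red_delta (q + 2) (W (int f)) (ot g) = (8, s, 1, ot g, 0)"
      using f by (auto simp: W_def q_def red_delta_def mark_def s_def)
    show "work 4 3 (mark i (Suc f) 0) (Suc c) = W(int f := s)"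
      unfolding W_def using work_upd_vertex[OF f]
      by simp (rule work_cong, auto simp: mark_def s_def closed_nbhd_def)
  qed (simp_all add: q_def)
  finally show ?thesis
    unfolding q_def W_def c_def[symmetric] by (rule back_subst[where P = "\<lambda>t. reach _ t _"]) simp
qed

lemma lookup_step:
  assumes "i < n" and "f < n"
  shows "reach (8, work 4 3 (mark i f 0) (i * n + f), int f, ot, g)
      (2 * n + 2 * k + 2 * (i * n + f) + 7)
    (8, work 4 3 (mark i (Suc f) 0) (Suc (i * n + f)), int f + 1, ot, g)"
proof -
  note reaches_trans[OF fetch_matrix_bit[OF assms] store_matrix_bit[OF assms]]
  then show ?thesis
    by (rule back_subst[where P = "\<lambda>t. reach _ t _"]) (use assms in simp)
qed

lemma lookup_row:
  assumes i: "i < n" and f: "f \<le> n"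
  shows "\<exists>t \<le> f * (2 * n + 2 * k + 2 * (n * n) + 7).
     reach (8, work 4 3 (mark i 0 0) (i * n), 0, ot, g) t
       (8, work 4 3 (mark i f 0) (i * n + f), int f, ot, g)"
  using f
proof (induction f)
  case 0 then show ?case by (intro exI[of _ 0]) simp
next
  case (Suc f)
  then obtain t where t: "t \<le> f * (2 * n + 2 * k + 2 * (n * n) + 7)"
    and R: "reach (8, work 4 3 (mark i 0 0) (i * n), 0, ot, g) t
      (8, work 4 3 (mark i f 0) (i * n + f), int f, ot, g)"
    by auto
  have fn: "f < n" using Suc.prems by simp
  have "i * n + f < n * n" using copy_index_lt[OF fn i] .
  then have b: "2 * n + 2 * k + 2 * (i * n + f) + 7 \<le> 2 * n + 2 * k + 2 * (n * n) + 7" by simp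
  have "reach (8, work 4 3 (mark i 0 0) (i * n), 0, ot, g)
      (t + (2 * n + 2 * k + 2 * (i * n + f) + 7))
     (8, work 4 3 (mark i (Suc f) 0) (i * n + Suc f), int (Suc f), ot, g)"
    using reaches_trans[OF R lookup_step[OF i fn]] by (simp add: ac_simps)
  moreover have "t + (2 * n + 2 * k + 2 * (i * n + f) + 7) \<le>
      Suc f * (2 * n + 2 * k + 2 * (n * n) + 7)"
    using t b by simp
  ultimately show ?case by blast
qed

lemma emitted_bit_mark: "v < n \<Longrightarrow> emitted_bit (mark i n p v) = bit_sym (closed_nbhd i v)"
  by (simp add: mark_def emitted_bit_def bit_sym_def closed_nbhd_def)

lemma query_sym_row:
  assumes "i < n" "p < n" "v < n"
  shows "query_sym (mat_start + i * (n * n) + p * n + v) = bit_sym (closed_nbhd i v)"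
proof -
  have pv: "p * n + v < n * n" using copy_index_lt[OF assms(3,2)] .
  have "query_sym (mat_start + i * (n * n) + p * n + v) = copies_bit (i * (n * n) + (p * n + v))"
    using query_sym_copies[of "i * (n * n) + (p * n + v)"] by (simp add: ac_simps)
  also have "(i * (n * n) + (p * n + v)) div (n * n) = i"
  proof -
    have nz: "n * n \<noteq> 0" using assms(1) by simp
    have e: "(i * (n * n) + (p * n + v)) = (p * n + v) + (n * n) * i" by (simp add: algebra_simps)
    have "(i * (n * n) + (p * n + v)) div (n * n) = i + (p * n + v) div (n * n)"
      unfolding e by (rule div_mult_self2[OF nz])
    then show ?thesis using pv by simp
  qed
  moreover have "(i * (n * n) + (p * n + v)) mod n = v"
  proof -
    have e: "i * (n * n) + (p * n + v) = v + n * (i * n + p)" by (simp add: algebra_simps)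
    show ?thesis unfolding e using assms(3) by simp
  qed
  ultimately show ?thesis by (simp add: copies_bit_def)
qed

lemma rewind_row:
  assumes "p < n"
  shows "reach (15, work 4 3 (mark i n p) c, N - 1, ot, g) (n + 1)
    (17, work 4 3 (mark i n p) c, 0, ot, g)"
proof -
  define W where "W = work 4 3 (mark i n p) c"
  have n1: "n \<ge> 1"
    using assms by simp
  have "reach (15, W, N - 1, ot, g) 1 (16, W, N - 2, ot, g)"
  proof (rule reach_step)
    have "W (N - 1) = mark i n p (n - 1)"
      using work_vertex[of "n - 1"] n1 by (simp add: W_def of_nat_diff)
    moreover have "\<not> n - 1 < p"
      using assms by simp
    ultimately show "red_delta 15 (W (N - 1)) (ot g) = (16, W (N - 1), -1, ot g, 0)"
      using assms n1 by (simp add: red_delta_def mark_def)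
  qed simp_all
  also have "reach (16, W, N - 2, ot, g) (nat (N - 2 + 1) + 1) (17, W, 0, ot, g)"
  proof (rule rewind_to_blank)
    fix x assume x: "0 \<le> x" "x \<le> N - 2"
    then have "x < N + K + 2 + N * N"
      using mult_nonneg_nonneg[of N N] by linarith
    then show "W x \<noteq> 0"
      unfolding W_def using x(1) by (rule work_mark_nz[rotated])
  qed (use n1 in \<open>auto simp: red_delta_def W_def\<close>)
  finally show ?thesis
    unfolding W_def by (rule back_subst[where P = "\<lambda>t. reach _ t _"]) (use n1 in simp)
qed

lemma emit_copy:
  assumes i: "i < n" and p: "p < n"
  shows "reach (15, work 4 3 (mark i n p) c, N - 1, query_prefix (mat_start + i * (n * n) + p * n),
      int (mat_start + i * (n * n) + p * n)) (2 * n + 2)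
    (15, work 4 3 (mark i n (Suc p)) c, N - 1, query_prefix (mat_start + i * (n * n) + p * n + n),
      int (mat_start + i * (n * n) + p * n + n))"
proof -
  define w where "w = mat_start + i * (n * n) + p * n"
  define W where "W = work 4 3 (mark i n p) c"
  define W' where "W' = work 4 3 (mark i n (Suc p)) c"
  have row: "query_sym (w + v) = bit_sym (closed_nbhd i v)" if "v < n" for v
    using query_sym_row[OF i p that] by (simp add: w_def)
  have "reach (15, W, N - 1, query_prefix w, int w) (n + 1) (17, W, 0, query_prefix w, int w)"
    unfolding W_def by (rule rewind_row[OF p])
  also have "reach (17, W, 0, query_prefix w, int w) p
      (17, W, int p, query_prefix (w + p), int (w + p))"
  proof -
    have "reach (17, W, 0, query_prefix w, int w) p
        (17, W, 0 + int p, query_prefix (w + p), int (w + p))"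
      by (rule emit_query[where P = "{9, 10, 13}" and \<chi> = emitted_bit])
        (use p in \<open>auto simp: red_delta_def W_def mark_def row emitted_bit_def bit_sym_def
          closed_nbhd_def\<close>)
    then show ?thesis by simp
  qed
  also have "reach (17, W, int p, query_prefix (w + p), int (w + p)) 1
      (18, W', int p + 1, query_prefix (w + p + 1), int (w + p + 1))"
  proof (rule reach_step)
    define s where "s = mark i n p p"
    have "W (int p) = s" and s: "s \<in> {7, 8, 12}"
      using p by (simp_all add: W_def s_def mark_def)
    then show "red_delta 17 (W (int p)) (query_prefix (w + p) (int (w + p))) =
        (18, s + 2 - (if s = 12 then 1 else 0), 1, emitted_bit s, 1)"
      by (auto simp: red_delta_def)
    have "mark i n (Suc p) = (mark i n p)(p := s + 2 - (if s = 12 then 1 else 0))"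
      using p by (auto simp: fun_eq_iff mark_def s_def)
    then show "W' = W(int p := s + 2 - (if s = 12 then 1 else 0))"
      unfolding W'_def W_def work_upd_vertex[OF p] by simp
    have "emitted_bit s = query_sym (w + p)"
      using row[OF p] emitted_bit_mark[OF p, of i p] by (simp add: s_def)
    then show "query_prefix (w + p + 1) = (query_prefix (w + p))(int (w + p) := emitted_bit s)"
      using query_prefix_upd[of "w + p" "emitted_bit s"] by simp
  qed simp_all
  also have "reach (18, W', int p + 1, query_prefix (w + p + 1), int (w + p + 1)) (n - p - 1)
      (18, W', N, query_prefix (w + n), int (w + n))"
  proof -
    have "reach (18, W', int (p + 1), query_prefix (w + (p + 1)), int (w + (p + 1))) (n - p - 1)
        (18, W', int (p + 1) + int (n - p - 1), query_prefix (w + (p + 1) + (n - p - 1)),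
         int (w + (p + 1) + (n - p - 1)))"
    proof (rule emit_query[where P = "{7, 8, 9, 10, 12, 13}" and \<chi> = emitted_bit])
      show "\<forall>j<n - p - 1. W' (int (p + 1) + int j) \<in> {7, 8, 9, 10, 12, 13} \<and>
          emitted_bit (W' (int (p + 1) + int j)) = query_sym (w + (p + 1) + j)"
      proof (intro allI impI)
        fix j assume "j < n - p - 1"
        then have "p + 1 + j < n" by simp
        then show "W' (int (p + 1) + int j) \<in> {7, 8, 9, 10, 12, 13} \<and>
            emitted_bit (W' (int (p + 1) + int j)) = query_sym (w + (p + 1) + j)"
          using work_vertex[of "p + 1 + j"] emitted_bit_mark[of "p + 1 + j"] row[of "p + 1 + j"]
          by (simp add: W'_def mark_def ac_simps)
      qed
    qed (auto simp: red_delta_def)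
    then show ?thesis
      using p by (simp add: ac_simps)
  qed
  also have "reach (18, W', N, query_prefix (w + n), int (w + n)) 1
      (15, W', N - 1, query_prefix (w + n), int (w + n))"
  proof (rule reach_step)
    show "red_delta 18 (W' N) (query_prefix (w + n) (int (w + n))) =
        (15, 4, -1, query_prefix (w + n) (int (w + n)), 0)"
      by (simp add: W'_def red_delta_def)
  qed (simp_all add: W'_def)
  finally show ?thesis
    unfolding W_def W'_def w_def by (rule back_subst[where P = "\<lambda>t. reach _ t _"]) (use p in simp)
qed

lemma emit_copies:
  assumes i: "i < n" and p: "p \<le> n"
  shows "reach (15, work 4 3 (mark i n 0) c, N - 1, query_prefix (mat_start + i * (n * n)),
      int (mat_start + i * (n * n)))
     (p * (2 * n + 2))
     (15, work 4 3 (mark i n p) c, N - 1, query_prefix (mat_start + i * (n * n) + p * n),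
      int (mat_start + i * (n * n) + p * n))"
  using p
proof (induction p)
  case (Suc p)
  then have "p < n" and "p \<le> n"
    by simp_all
  from reaches_trans[OF Suc.IH[OF \<open>p \<le> n\<close>] emit_copy[OF i \<open>p < n\<close>, of c]] show ?case
    by (simp add: ac_simps)
qed simp

lemma work_fill_vertices:
  "a + m \<le> n \<Longrightarrow> (\<lambda>x. if int a \<le> x \<and> x < int a + int m then 2 else work A B R c x) =
     work A B (\<lambda>v. if a \<le> v \<and> v < a + m then 2 else R v) c"
  by (auto simp: fun_eq_iff work_def nat_less_iff le_nat_iff)

lemma reset_marks:
  assumes i: "i < n"
  shows "reach (15, work 4 3 (mark i n n) c, N - 1, ot, g) (n + i + 2)
    (20, work 4 3 (\<lambda>v. if v \<le> i then 2 else mark i n n v) c, int i + 1, ot, g)"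
proof -
  define W where "W = work 4 3 (mark i n n) c"
  define R where "R = (\<lambda>v. if 0 \<le> v \<and> v < 0 + i then 2 else mark i n n v)"
  have "reach (15, W, N - 1, ot, g) n (15, W, -1, ot, g)"
  proof -
    have "reach (15, W, N - 1, ot, g) n (15, W, N - 1 - int n, ot, g)"
    proof (rule scan_left[where P = "{9, 10, 13}"])
      show "\<forall>j<n. W (N - 1 - int j) \<in> {9, 10, 13}"
      proof (intro allI impI)
        fix j assume "j < n"
        then have pos: "N - 1 - int j = int (n - 1 - j)" and "n - 1 - j < n"
          by simp_all
        then show "W (N - 1 - int j) \<in> {9, 10, 13}"
          unfolding pos W_def by (simp add: mark_def)
      qed
    qed (auto simp: red_delta_def)
    then show ?thesis by simp
  qed
  also have "reach (15, W, -1, ot, g) 1 (19, W, 0, ot, g)"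
  proof (rule reach_step)
    show "red_delta 15 (W (-1)) (ot g) = (19, 0, 1, ot g, 0)"
      by (simp add: W_def red_delta_def)
  qed (simp_all add: W_def)
  also have "reach (19, W, 0, ot, g) i (19, work 4 3 R c, int i, ot, g)"
  proof -
    have "reach (19, W, 0, ot, g) i
        (19, \<lambda>x. if 0 \<le> x \<and> x < 0 + int i then (\<lambda>_. 2) (W x) else W x, 0 + int i, ot, g)"
      by (rule scan_right_rewrite[where P = "{9, 10}"])
        (use i in \<open>auto simp: red_delta_def W_def mark_def\<close>)
    then show ?thesis
      unfolding W_def R_def using work_fill_vertices[of 0 i 4 3 "mark i n n" c] i by simp
  qed
  also have "reach (19, work 4 3 R c, int i, ot, g) 1
      (20, work 4 3 (\<lambda>v. if v \<le> i then 2 else mark i n n v) c, int i + 1, ot, g)"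
  proof (rule reach_step)
    show "red_delta 19 (work 4 3 R c (int i)) (ot g) = (20, 2, 1, ot g, 0)"
      using i by (simp add: R_def mark_def red_delta_def)
    show "work 4 3 (\<lambda>v. if v \<le> i then 2 else mark i n n v) c = (work 4 3 R c)(int i := 2)"
      unfolding work_upd_vertex[OF i] by (rule work_cong) (auto simp: R_def)
  qed simp_all
  finally show ?thesis
    by (simp add: W_def ac_simps)
qed

lemma next_row:
  assumes "Suc i < n"
  shows "reach (20, work 4 3 (\<lambda>v. if v \<le> i then 2 else mark i n n v) c, int i + 1, ot, g)
    (2 * n - i + 1) (8, work 4 3 (mark (Suc i) 0 0) c, 0, ot, g)"
proof -
  define R where "R = (\<lambda>v. if v \<le> i then 2 else mark i n n v)"
  define R' where "R' = R(Suc i := 11)"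
  have "reach (20, work 4 3 R c, int i + 1, ot, g) 1 (21, work 4 3 R' c, int (Suc (Suc i)), ot, g)"
  proof (rule reach_step)
    have "work 4 3 R c (int i + 1) = R (Suc i)"
      using work_vertex[OF assms, of 4 3 R c] by (simp add: add.commute)
    then show "red_delta 20 (work 4 3 R c (int i + 1)) (ot g) = (21, 11, 1, ot g, 0)"
      using assms by (simp add: R_def mark_def red_delta_def)
    show "work 4 3 R' c = (work 4 3 R c)(int i + 1 := 11)"
      using work_upd_vertex[OF assms] by (simp add: R'_def add.commute)
  qed simp_all
  also have "reach (21, work 4 3 R' c, int (Suc (Suc i)), ot, g) (n - Suc (Suc i))
      (21, work 4 3 (mark (Suc i) 0 0) c, N, ot, g)"
  proof -
    have "reach (21, work 4 3 R' c, int (Suc (Suc i)), ot, g) (n - Suc (Suc i))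
      (21, \<lambda>x. if int (Suc (Suc i)) \<le> x \<and> x < int (Suc (Suc i)) + int (n - Suc (Suc i))
               then (\<lambda>_. 2) (work 4 3 R' c x) else work 4 3 R' c x,
       int (Suc (Suc i)) + int (n - Suc (Suc i)), ot, g)"
    proof (rule scan_right_rewrite[where P = "{9, 10}"])
      show "\<forall>j<n - Suc (Suc i). work 4 3 R' c (int (Suc (Suc i)) + int j) \<in> {9, 10}"
      proof (intro allI impI)
        fix j assume "j < n - Suc (Suc i)"
        then have j: "Suc (Suc i) + j < n" by simp
        have "int (Suc (Suc i)) + int j = int (Suc (Suc i) + j)" by simp
        then show "work 4 3 R' c (int (Suc (Suc i)) + int j) \<in> {9, 10}"
          using j by (simp only: work_vertex) (simp add: R'_def R_def mark_def)
      qed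
    qed (auto simp: red_delta_def)
    moreover have "work 4 3 (\<lambda>v. if Suc (Suc i) \<le> v \<and> v < Suc (Suc i) + (n - Suc (Suc i)) then 2
        else R' v) c = work 4 3 (mark (Suc i) 0 0) c"
      by (rule work_cong) (auto simp: R'_def R_def mark_def)
    ultimately show ?thesis
      using work_fill_vertices[of "Suc (Suc i)" "n - Suc (Suc i)" 4 3 R' c] assms by simp
  qed
  also have "reach (21, work 4 3 (mark (Suc i) 0 0) c, N, ot, g) 1
      (7, work 4 3 (mark (Suc i) 0 0) c, N - 1, ot, g)"
  proof (rule reach_step)
    show "red_delta 21 (work 4 3 (mark (Suc i) 0 0) c N) (ot g) = (7, 4, -1, ot g, 0)"
      by (simp add: red_delta_def)
  qed simp_all
  also have "reach (7, work 4 3 (mark (Suc i) 0 0) c, N - 1, ot, g) (nat (N - 1 + 1) + 1)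
      (8, work 4 3 (mark (Suc i) 0 0) c, 0, ot, g)"
    by (rule rewind_to_blank) (use assms in \<open>auto simp: red_delta_def work_vertex'\<close>)
  finally show ?thesis
    unfolding R_def by (rule back_subst[where P = "\<lambda>t. reach _ t _"]) (use assms in simp)
qed

lemma last_row:
  assumes "Suc i = n"
  shows "reach (20, work 4 3 (\<lambda>v. if v \<le> i then 2 else mark i n n v) c, int i + 1, ot, g)
    (n + 2) (23, work 4 3 (\<lambda>_. 2) c, 0, ot, g)"
proof -
  have W: "work 4 3 (\<lambda>v. if v \<le> i then 2 else mark i n n v) c = work 4 3 (\<lambda>_. 2) c"
    by (rule work_cong) (use assms in auto)
  have "reach (20, work 4 3 (\<lambda>_. 2) c, N, ot, g) 1 (22, work 4 3 (\<lambda>_. 2) c, N - 1, ot, g)"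
  proof (rule reach_step)
    show "red_delta 20 (work 4 3 (\<lambda>_. 2) c N) (ot g) = (22, 4, -1, ot g, 0)"
      by (simp add: red_delta_def)
  qed simp_all
  also have "reach (22, work 4 3 (\<lambda>_. 2) c, N - 1, ot, g) n (22, work 4 3 (\<lambda>_. 2) c, -1, ot, g)"
  proof -
    have "reach (22, work 4 3 (\<lambda>_. 2) c, N - 1, ot, g) n
        (22, work 4 3 (\<lambda>_. 2) c, N - 1 - int n, ot, g)"
      by (rule scan_left[where P = "{2}"]) (auto simp: red_delta_def of_nat_diff work_vertex')
    then show ?thesis by simp
  qed
  also have "reach (22, work 4 3 (\<lambda>_. 2) c, -1, ot, g) 1 (23, work 4 3 (\<lambda>_. 2) c, 0, ot, g)"
  proof (rule reach_step)
    show "red_delta 22 (work 4 3 (\<lambda>_. 2) c (-1)) (ot g) = (23, 0, 1, ot g, 0)"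
      by (simp add: red_delta_def)
  qed simp_all
  finally show ?thesis
    unfolding W using assms[symmetric] by (simp add: add.commute)
qed

definition row_time :: nat where
  "row_time = n * (2 * n + 2 * k + 2 * (n * n) + 7) + 1 + n * (2 * n + 2) + (3 * n + 3)"

definition row_config :: "nat \<Rightarrow> config" where
  "row_config i = (8, work 4 3 (mark i 0 0) (i * n), 0, query_prefix (mat_start + i * (n * n)),
     int (mat_start + i * (n * n)))"

definition query_config :: config where
  "query_config = (23, work 4 3 (\<lambda>_. 2) (n * n), 0, query_prefix (mat_start + n * (n * n)),
     int (mat_start + n * (n * n)))"

lemma process_row:
  assumes i: "i < n"
  shows "\<exists>t \<le> row_time.
    reach (row_config i) t (if Suc i < n then row_config (Suc i) else query_config)"
proof -
  define w where "w = mat_start + i * (n * n)"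
  define c where "c = Suc i * n"
  define marks where "marks = (\<lambda>v. if v \<le> i then 2 else mark i n n v)"
  obtain t1 where t1: "t1 \<le> n * (2 * n + 2 * k + 2 * (n * n) + 7)"
    and "reach (8, work 4 3 (mark i 0 0) (i * n), 0, query_prefix w, int w) t1
      (8, work 4 3 (mark i n 0) (i * n + n), N, query_prefix w, int w)"
    using lookup_row[OF i order.refl] by blast
  then have "reach (row_config i) t1 (8, work 4 3 (mark i n 0) c, N, query_prefix w, int w)"
    by (simp add: row_config_def w_def c_def add.commute)
  also have "reach (8, work 4 3 (mark i n 0) c, N, query_prefix w, int w) 1
      (15, work 4 3 (mark i n 0) c, N - 1, query_prefix w, int w)"
  proof (rule reach_step)
    show "red_delta 8 (work 4 3 (mark i n 0) c N) (query_prefix w (int w)) =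
        (15, 4, -1, query_prefix w (int w), 0)"
      by (simp add: red_delta_def)
  qed simp_all
  also have "reach (15, work 4 3 (mark i n 0) c, N - 1, query_prefix w, int w) (n * (2 * n + 2))
      (15, work 4 3 (mark i n n) c, N - 1, query_prefix (w + n * n), int (w + n * n))"
    using emit_copies[OF i order.refl] by (simp add: w_def)
  also have "reach (15, work 4 3 (mark i n n) c, N - 1, query_prefix (w + n * n), int (w + n * n))
      (n + i + 2) (20, work 4 3 marks c, int i + 1, query_prefix (w + n * n), int (w + n * n))"
    unfolding marks_def by (rule reset_marks[OF i])
  finally have rows: "reach (row_config i) (t1 + 1 + n * (2 * n + 2) + (n + i + 2))
      (20, work 4 3 marks c, int i + 1, query_prefix (w + n * n), int (w + n * n))" .
  have next_w: "w + n * n = mat_start + Suc i * (n * n)"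
    by (simp add: w_def)
  show ?thesis
  proof (cases "Suc i < n")
    case True
    then have "reach (row_config i) (t1 + 1 + n * (2 * n + 2) + (n + i + 2) + (2 * n - i + 1))
        (row_config (Suc i))"
      using reaches_trans[OF rows[unfolded marks_def] next_row[OF True]]
      by (simp add: marks_def row_config_def next_w c_def)
    moreover have "t1 + 1 + n * (2 * n + 2) + (n + i + 2) + (2 * n - i + 1) \<le> row_time"
      using t1 i by (simp add: row_time_def)
    ultimately show ?thesis
      using True by auto
  next
    case False
    then have last: "Suc i = n"
      using i by simp
    then have "reach (row_config i) (t1 + 1 + n * (2 * n + 2) + (n + i + 2) + (n + 2)) query_config"
      using reaches_trans[OF rows[unfolded marks_def] last_row[OF last]]
      by (simp add: marks_def query_config_def next_w c_def)
    moreover have "t1 + 1 + n * (2 * n + 2) + (n + i + 2) + (n + 2) \<le> row_time"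
      using t1 last by (simp add: row_time_def)
    ultimately show ?thesis
      using False by auto
  qed
qed

lemma process_rows:
  assumes i: "i < n"
  shows "\<exists>t \<le> i * row_time. reach (row_config 0) t (row_config i)"
  using i
proof (induction i)
  case 0 then show ?case by (intro exI[of _ 0]) simp
next
  case (Suc i)
  then obtain t where t: "t \<le> i * row_time" and R: "reach (row_config 0) t (row_config i)" by auto
  obtain t' where t': "t' \<le> row_time" and R': "reach (row_config i) t' (row_config (Suc i))"
    using process_row[of i] Suc.prems by auto
  show ?case using reaches_trans[OF R R'] t t' by (intro exI[of _ "t + t'"]) simp
qed

lemma process_no_rows:
  assumes "n = 0"
  shows "reach (row_config 0) 4 query_config"
proof -
  define W where "W = work 4 3 (\<lambda>_. 2) 0"
  define Ot where "Ot = query_prefix mat_start"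
  define g where "g = int mat_start"
  have W0: "W 0 = 4"
    using work_sep1[of 4 3 "\<lambda>_. 2" 0] assms by (simp add: W_def)
  have "W (-1) = 0"
    by (simp add: W_def)
  have "work 4 3 (mark 0 0 0) 0 = W"
    unfolding W_def by (rule work_cong) (simp add: assms)
  then have "row_config 0 = (8, W, 0, Ot, g)"
    unfolding row_config_def W_def Ot_def g_def by simp
  moreover have "query_config = (23, W, 0, Ot, g)"
    unfolding query_config_def W_def Ot_def g_def using assms by simp
  moreover have "reach (8, W, 0, Ot, g) 4 (23, W, 0, Ot, g)"
  proof -
    have "reach (8, W, 0, Ot, g) 1 (15, W, -1, Ot, g)"
    proof (rule reach_step)
      show "red_delta 8 (W 0) (Ot g) = (15, 4, -1, Ot g, 0)"
        by (simp add: W0 red_delta_def)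
    qed (simp_all add: W0)
    also have "reach (15, W, -1, Ot, g) 1 (19, W, 0, Ot, g)"
    proof (rule reach_step)
      show "red_delta 15 (W (-1)) (Ot g) = (19, 0, 1, Ot g, 0)"
        by (simp add: \<open>W (-1) = 0\<close> red_delta_def)
    qed (simp_all add: \<open>W (-1) = 0\<close>)
    also have "reach (19, W, 0, Ot, g) 1 (22, W, -1, Ot, g)"
    proof (rule reach_step)
      show "red_delta 19 (W 0) (Ot g) = (22, 4, -1, Ot g, 0)"
        by (simp add: W0 red_delta_def)
    qed (simp_all add: W0)
    also have "reach (22, W, -1, Ot, g) 1 (23, W, 0, Ot, g)"
    proof (rule reach_step)
      show "red_delta 22 (W (-1)) (Ot g) = (23, 0, 1, Ot g, 0)"
        by (simp add: \<open>W (-1) = 0\<close> red_delta_def)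
    qed (simp_all add: \<open>W (-1) = 0\<close>)
    finally show ?thesis
      by (simp add: numeral_eq_Suc)
  qed
  ultimately show ?thesis
    by simp
qed

lemma process_all_rows: "\<exists>t \<le> n * row_time + 4. reach (row_config 0) t query_config"
proof (cases "n = 0")
  case False
  obtain t where t: "t \<le> (n - 1) * row_time" and R: "reach (row_config 0) t (row_config (n - 1))"
    using process_rows[of "n - 1"] False by auto
  obtain t' where t': "t' \<le> row_time" and R': "reach (row_config (n - 1)) t' query_config"
    using process_row[of "n - 1"] False by auto
  have "t + t' \<le> (n - 1) * row_time + row_time"
    using t t' by simp
  also have "\<dots> = n * row_time"
    using False by (cases n) auto
  finally show ?thesis
    using reaches_trans[OF R R'] by (intro exI[of _ "t + t'"]) simp
qed (use process_no_rows in auto)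

definition dom_word :: "bool list" where
  "dom_word = enc DomSet (n, E, k)"

definition query_word :: "bool list" where
  "query_word = enc LeftBIS (n, n * n, nbhd_copies n E, k)"

lemma length_dom_word: "length dom_word = n + k + 2 + n * n"
  by (simp add: dom_word_def DomSet_def)

lemma length_query_word: "length query_word = mat_start + n * (n * n)"
  by (simp add: query_word_def LeftBIS_def mat_start_def)

lemma nth_dom_word:
  assumes "j < length dom_word"
  shows "bit_sym (dom_word ! j) = work 1 1 (\<lambda>_. 2) 0 (int j)"
proof -
  have j: "j < n + k + 2 + n * n"
    using assms by (simp add: length_dom_word)
  consider "j < n" | "j = n" | "n < j \<and> j \<le> n + k" | "j = n + k + 1" | "n + k + 1 < j"
    by linarith
  then show ?thesis
  proof cases
    case 3
    then have "j - Suc n < k"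
      by linarith
    with 3 show ?thesis
      by (simp add: dom_word_def DomSet_def nth_un_append bit_sym_def work_ones)
  next
    case 4
    then have "dom_word ! j = False"
      by (simp add: dom_word_def DomSet_def nth_un_append)
    moreover have "int j = N + K + 1"
      using 4 by simp
    ultimately show ?thesis
      by (simp add: bit_sym_def)
  next
    case 5
    then have "\<not> j - Suc n < k" "j - Suc n \<noteq> k" and t: "j - (n + k + 2) < n * n"
      using j by simp_all
    moreover have "int j < int (n + k + 2 + n * n)"
      using j by (simp only: of_nat_less_iff)
    then have "N + K + 2 \<le> int j" and "int j < N + K + 2 + N * N"
      using 5 by simp_all
    moreover have "nat (int j - (N + K + 2)) = j - (n + k + 2)"
      using 5 by simp
    ultimately show ?thesis
      using 5 nth_matrix_enc[OF t, of E] work_matrix[of 0 "int j" 1 1 "\<lambda>_. 2"]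
      by (simp add: dom_word_def DomSet_def nth_un_append input_bit_def)
  qed (simp_all add: dom_word_def DomSet_def nth_un_append bit_sym_def)
qed

lemma tape_of_dom_word: "tape_of dom_word = work 1 1 (\<lambda>_. 2) 0"
proof
  fix x
  show "tape_of dom_word x = work 1 1 (\<lambda>_. 2) 0 x"
  proof (cases "0 \<le> x \<and> nat x < length dom_word")
    case True
    then show ?thesis
      using nth_dom_word[of "nat x"] by (simp add: tape_of_nth)
  next
    case False
    show ?thesis
    proof (cases "x < 0")
      case False
      with \<open>\<not> (0 \<le> x \<and> nat x < length dom_word)\<close> have "int (n + k + 2 + n * n) \<le> x"
        using le_nat_iff[of x "n + k + 2 + n * n"] by (simp add: length_dom_word)
      then show ?thesis
        using False \<open>\<not> (0 \<le> x \<and> nat x < length dom_word)\<close> by (simp add: tape_of_nth work_end)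
    qed (simp add: tape_of_nth)
  qed
qed

lemma query_sym_query_word:
  assumes j: "j < length query_word"
  shows "query_sym j = bit_sym (query_word ! j)"
proof -
  note nth = query_word_def LeftBIS_def nth_un_append query_sym_def bit_sym_def
  consider "j < n" | "j = n" | "n < j \<and> j \<le> n + n * n" | "j = n + n * n + 1"
    | "n + n * n + 1 < j \<and> j < n + n * n + k + 2" | "j = n + n * n + k + 2" | "mat_start \<le> j"
    unfolding mat_start_def by linarith
  then show ?thesis
  proof cases
    case 3
    then have "j - Suc n < n * n" by linarith
    with 3 show ?thesis by (simp add: nth)
  next
    case 4
    then have "j - Suc n = n * n" by linarith
    with 4 show ?thesis by (simp add: nth)
  next
    case 5
    then have "\<not> j - Suc n < n * n" "j - Suc n \<noteq> n * n" "j - Suc n - Suc (n * n) < k"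
      by linarith+
    with 5 show ?thesis by (simp add: nth)
  next
    case 6
    then have "\<not> j - Suc n < n * n" "j - Suc n \<noteq> n * n" "j - Suc n - Suc (n * n) = k"
      by linarith+
    with 6 show ?thesis by (simp add: nth)
  next
    case 7
    define t where "t = j - mat_start"
    have t: "t < n * (n * n)"
      using j 7 by (simp add: length_query_word t_def)
    then have "0 < n"
      by (auto intro: gr0I)
    have "t div (n * n) < n"
      using t by (simp add: less_mult_imp_div_less mult.commute)
    moreover have "\<not> j - Suc n < n * n" "j - Suc n \<noteq> n * n" "\<not> j - Suc n - Suc (n * n) < k"
      "j - Suc n - Suc (n * n) \<noteq> k" "\<not> j < n" "j \<noteq> n" "j - Suc n - Suc (n * n) - Suc k = t"
      using 7 by (simp_all add: t_def mat_start_def)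
    ultimately have "query_word ! j = closed_nbhd (t div (n * n)) (t mod n)"
      using nth_matrix_enc[OF t, of "nbhd_copies n E"] \<open>0 < n\<close>
      by (auto simp: query_word_def LeftBIS_def nth_un_append nbhd_copies_def closed_nbhd_def
          mod_mod_cancel)
    moreover have "query_sym j = copies_bit t"
      using 7 query_sym_copies[of t] by (simp add: t_def)
    ultimately show ?thesis
      by (simp add: copies_bit_def)
  qed (simp_all add: nth)
qed

lemma read_query_config: "read_tape (query_prefix (mat_start + n * (n * n))) = query_word"
proof (rule read_tape_eq)
  fix j assume j: "j < length query_word"
  then have "int j < int (mat_start + n * (n * n))"
    unfolding length_query_word by (simp only: of_nat_less_iff)
  then show "query_prefix (mat_start + n * (n * n)) (int j) = bit_sym (query_word ! j)"
    using query_sym_query_word[OF j] by (simp add: query_prefix_def)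
qed (simp add: query_prefix_def length_query_word)

lemma copy_answer:
  "\<exists>t \<le> 2 * n + 2. \<exists>W h ot g.
    reach (24, work 4 3 (\<lambda>_. 2) (n * n), 0, tape_of A, 0) t (26, W, h, ot, g)
      \<and> read_tape W = strip_zeros (take n A)"
proof -
  define m where "m = min n (length A)"
  define W0 where "W0 = work 4 3 (\<lambda>_. 2) (n * n)"
  define T where "T = tape_of A"
  define W1 where "W1 = (\<lambda>x. if 0 \<le> x \<and> x < 0 + int m then T (0 + (x - 0)) else W0 x)"
  define W2 where "W2 = W1(int m := 0)"
  define bits where "bits = strip_zeros (take n A)"
  define z where "z = length bits"
  define W3 where
    "W3 = (\<lambda>x. if int m - 1 - int (m - z) < x \<and> x \<le> int m - 1 then (\<lambda>_. 0) (W2 x) else W2 x)"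
  have len: "length (take n A) = m"
    by (simp add: m_def)
  have zeros: "take n A = bits @ replicate (m - z) False"
    using strip_zeros_append[of "take n A"] len by (simp add: bits_def z_def)
  have "z \<le> m"
    using length_strip_zeros[of "take n A"] unfolding len by (simp add: bits_def z_def)
  have T: "j < length A \<Longrightarrow> T (int j) = bit_sym (A ! j)" for j
    by (simp add: T_def tape_of_nth)
  have "reach (24, W0, 0, T, 0) m (24, W1, 0 + int m, T, 0 + int m)"
    unfolding W1_def by (rule scan_right_copy[where P = "{2}" and R = "{1, 2}"])
      (use T in \<open>auto simp: m_def W0_def bit_sym_def red_delta_def\<close>)
  also have "reach (24, W1, 0 + int m, T, 0 + int m) 1 (25, W2, int m - 1, T, int m)"
  proof (rule reach_step)
    have "\<not> (W1 (int m) = 2 \<and> T (int m) \<in> {1, 2})"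
      by (cases "m = n") (auto simp: W1_def W0_def T_def tape_of_nth m_def)
    then show "red_delta 24 (W1 (0 + int m)) (T (0 + int m)) = (25, 0, -1, T (0 + int m), 0)"
      by (simp add: red_delta_def)
  qed (simp_all add: W2_def)
  also have "reach (25, W2, int m - 1, T, int m) (m - z) (25, W3, int z - 1, T, int m)"
  proof -
    have "reach (25, W2, int m - 1, T, int m) (m - z) (25, W3, int m - 1 - int (m - z), T, int m)"
      unfolding W3_def
    proof (rule scan_left_rewrite[where P = "{1}"])
      show "\<forall>j<m - z. W2 (int m - 1 - int j) \<in> {1}"
      proof (intro allI impI)
        fix j assume "j < m - z"
        then have pos: "int m - 1 - int j = int (m - 1 - j)" and "z \<le> m - 1 - j" "m - 1 - j < m"
          by auto
        moreover have "take n A ! (m - 1 - j) = False"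
          using \<open>z \<le> m - 1 - j\<close> \<open>m - 1 - j < m\<close> by (simp add: zeros nth_append z_def)
        ultimately have "A ! (m - 1 - j) = False" and "m - 1 - j < length A"
          using len by (simp_all add: m_def)
        then show "W2 (int m - 1 - int j) \<in> {1}"
          unfolding pos using T \<open>m - 1 - j < m\<close> by (simp add: W2_def W1_def bit_sym_def)
      qed
    qed (auto simp: red_delta_def)
    then show ?thesis
      using \<open>z \<le> m\<close> by simp
  qed
  also have "reach (25, W3, int z - 1, T, int m) 1 (26, W3, int z - 1, T, int m)"
  proof (rule reach_step)
    have "W3 (int z - 1) \<noteq> 1"
    proof (cases "z = 0")
      case False
      then have "last bits" and "bits \<noteq> []"
        using last_strip_zeros[of "take n A"] by (simp_all add: bits_def z_def)
      then have "bits ! (z - 1)"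
        by (simp add: z_def last_conv_nth)
      then have "take n A ! (z - 1)"
        using False by (simp add: zeros nth_append z_def)
      moreover have "z - 1 < m"
        using False \<open>z \<le> m\<close> by simp
      ultimately have "A ! (z - 1)" "z - 1 < length A" and "int z - 1 = int (z - 1)"
        using len False by (auto simp: m_def)
      then show ?thesis
        using False \<open>z \<le> m\<close> T[of "z - 1"] by (simp add: W3_def W2_def W1_def bit_sym_def)
    qed (simp add: W3_def W2_def W1_def W0_def)
    then show "red_delta 25 (W3 (int z - 1)) (T (int m)) = (26, W3 (int z - 1), 0, T (int m), 0)"
      by (simp add: red_delta_def)
  qed simp_all
  finally have "reach (24, W0, 0, T, 0) (m + 1 + (m - z) + 1) (26, W3, int z - 1, T, int m)" .
  moreover have "read_tape W3 = bits"
  proof (rule read_tape_eq)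
    fix j assume j: "j < length bits"
    then have "j < m" and "j < length A" and "bits ! j = A ! j"
      using \<open>z \<le> m\<close> nth_strip_zeros[of j "take n A"] by (auto simp: z_def m_def bits_def)
    then show "W3 (int j) = bit_sym (bits ! j)"
      using j \<open>z \<le> m\<close> T by (simp add: W3_def W2_def W1_def z_def)
  next
    show "W3 (int (length bits)) \<notin> {1, 2}"
      by (cases "z = m") (use \<open>z \<le> m\<close> in \<open>auto simp: W3_def W2_def z_def[symmetric]\<close>)
  qed
  moreover have "m + 1 + (m - z) + 1 \<le> 2 * n + 2"
    using \<open>z \<le> m\<close> by (simp add: m_def)
  ultimately show ?thesis
    unfolding W0_def T_def bits_def by blast
qed

lemma header_to_first_row:
  "reach (0, work 1 1 (\<lambda>_. 2) 0, 0, query_prefix 0, 0)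
      ((n + 1) + (k + 1 + n * n + 1) + (n * n + 1 + k + 1 + k + 1) + (n + k + 2)) (row_config 0)"
proof -
  note write_unary_n
  also note write_unary_nn
  also note write_unary_k
  also have "reach (7, work 4 3 (mark 0 0 0) 0, N + K, query_prefix mat_start, int mat_start)
      (nat (N + K + 1) + 1) (8, work 4 3 (mark 0 0 0) 0, 0, query_prefix mat_start, int mat_start)"
  proof (rule rewind_to_blank)
    fix x assume "0 \<le> x" "x \<le> N + K"
    then have "x < N + K + 2 + N * N"
      using mult_nonneg_nonneg[of N N] by linarith
    then show "work 4 3 (mark 0 0 0) 0 x \<noteq> 0"
      using \<open>0 \<le> x\<close> by (rule work_mark_nz[rotated])
  qed (auto simp: red_delta_def)
  finally show ?thesis
    by (simp add: row_config_def nat_add_distrib)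
qed

lemma init_config_dom_word:
  "init_config red_machine dom_word = (0, work 1 1 (\<lambda>_. 2) 0, 0, query_prefix 0, 0)"
  by (simp add: init_config_def tape_of_dom_word fun_eq_iff query_prefix_def)

definition run_time :: nat where
  "run_time = (n + 1) + (k + 1 + n * n + 1) + (n * n + 1 + k + 1 + k + 1) + (n + k + 2) +
     (n * row_time + 4) + 1 + (2 * n + 2)"

lemma run_time_bound:
  assumes "1 \<le> k"
  shows "run_time \<le> k * length dom_word ^ 7"
proof -
  define L where "L = length dom_word"
  define P2 where "P2 = L * L"
  define P3 where "P3 = L * P2"
  have n: "n \<le> L" and "k \<le> L" "n * n \<le> L" and L3: "3 \<le> L"
    using assms by (auto simp: L_def length_dom_word)
  have "2 * n + 2 * k + 2 * (n * n) + 7 \<le> 5 * L"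
    using L3 by (simp add: L_def length_dom_word)
  from mult_le_mono[OF n this] have a: "n * (2 * n + 2 * k + 2 * (n * n) + 7) \<le> 5 * P2"
    by (simp add: P2_def)
  have "2 * n + 2 \<le> 4 * L"
    using n L3 by linarith
  from mult_le_mono[OF n this] have b: "n * (2 * n + 2) \<le> 4 * P2"
    by (simp add: P2_def)
  have P2: "3 * L \<le> P2"
    unfolding P2_def using mult_le_mono1[OF L3, of L] by simp
  have "row_time \<le> 11 * P2"
    unfolding row_time_def using a b P2 n L3 by linarith
  from mult_le_mono[OF n this] have "n * row_time \<le> 11 * P3"
    by (simp add: P3_def)
  moreover have "3 * P2 \<le> P3"
    unfolding P3_def using mult_le_mono1[OF L3, of P2] by simp
  ultimately have "run_time \<le> 81 * P3"
    unfolding run_time_def using P2 n \<open>k \<le> L\<close> \<open>n * n \<le> L\<close> L3 by linarith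
  also have "\<dots> \<le> L ^ 4 * P3"
    using power_mono[OF L3, of 4] by simp
  also have "\<dots> \<le> k * L ^ 7"
    using assms by (simp add: P3_def P2_def power_def)
  finally show ?thesis
    by (simp add: L_def)
qed

lemma reach_query_config:
  "\<exists>t \<le> run_time - (2 * n + 3). reach (init_config red_machine dom_word) t query_config"
proof -
  obtain t where t: "t \<le> n * row_time + 4" and "reach (row_config 0) t query_config"
    using process_all_rows by blast
  then have "reach (init_config red_machine dom_word)
      ((n + 1) + (k + 1 + n * n + 1) + (n * n + 1 + k + 1 + k + 1) + (n + k + 2) + t) query_config"
    using reaches_trans[OF header_to_first_row] by (simp add: init_config_dom_word)
  moreover have "(n + 1) + (k + 1 + n * n + 1) + (n * n + 1 + k + 1 + k + 1) + (n + k + 2) + t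
      \<le> run_time - (2 * n + 3)"
    using t unfolding run_time_def by linarith
  ultimately show ?thesis
    by blast
qed

lemma red_machine_run:
  assumes "is_oracle LeftBIS orc"
  shows "\<exists>t \<le> run_time. cstate (run orc red_machine dom_word t) = halt red_machine \<and>
    read_tape (cwork (run orc red_machine dom_word t)) =
      bin (sol LeftBIS (n, n * n, nbhd_copies n E, k) mod 2 ^ n) \<and>
    (\<forall>i<t. cstate (run orc red_machine dom_word i) = qry red_machine \<longrightarrow>
       read_tape (coracle (run orc red_machine dom_word i)) = query_word)"
proof -
  let ?answer = "bin (sol LeftBIS (n, n * n, nbhd_copies n E, k))"
  obtain t1 where t1: "t1 \<le> run_time - (2 * n + 3)"
    and R1: "reach (init_config red_machine dom_word) t1 query_config"
    using reach_query_config by blast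
  have "(n, n * n, nbhd_copies n E, k) \<in> inst LeftBIS"
    using nbhd_copies_subset by (simp add: LeftBIS_def)
  then have "orc query_word = ?answer"
    using assms unfolding is_oracle_def query_word_def by blast
  then have "step orc red_machine query_config =
      (24, work 4 3 (\<lambda>_. 2) (n * n), 0, tape_of ?answer, 0)"
    by (simp add: step_def query_config_def read_query_config)
  moreover obtain t2 W h ot g where t2: "t2 \<le> 2 * n + 2"
    and "reach (24, work 4 3 (\<lambda>_. 2) (n * n), 0, tape_of ?answer, 0) t2 (26, W, h, ot, g)"
    and "read_tape W = strip_zeros (take n ?answer)"
    using copy_answer by blast
  ultimately have R2: "reach (step orc red_machine query_config) t2 (26, W, h, ot, g)"
    and W: "read_tape W = bin (sol LeftBIS (n, n * n, nbhd_copies n E, k) mod 2 ^ n)"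
    by (simp_all add: bin_mod_power2)
  have "cstate query_config = qry red_machine"
    by (simp add: query_config_def cstate_def)
  note run = reaches_through_query[OF R1 this R2, folded run_def]
  show ?thesis
  proof (intro exI conjI)
    show "t1 + 1 + t2 \<le> run_time"
      using t1 t2 by (simp add: run_time_def)
  qed (use run W in
      \<open>auto simp: cstate_def cwork_def coracle_def query_config_def read_query_config\<close>)
qed

end

lemma computable_id: "computable id"
proof -
  let ?M = "\<lparr>nstates = 1, nsyms = 3, start = 0, halt = 0, qry = 0, ans = 0,
    delta = \<lambda>_ _ _. (0, 0, 0, 0, 0)\<rparr>"
  have "wf_otm ?M"
    by (simp add: wf_otm_def)
  moreover have "cstate (run (\<lambda>_. []) ?M (bin m) 0) = halt ?M \<and>
      read_tape (cwork (run (\<lambda>_. []) ?M (bin m) 0)) = bin (id m)" for m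
    by (simp add: run_def init_config_def cstate_def cwork_def)
  ultimately show ?thesis
    unfolding computable_def by blast
qed

lemma LeftBIS_par_of_enc:
  assumes "y \<in> inst LeftBIS" and "enc LeftBIS y = enc LeftBIS (a, b, F, l)"
  shows "par LeftBIS y = l"
proof -
  obtain a' b' F' l' where y: "y = (a', b', F', l')"
    by (cases y) auto
  have "un a' @ un b' @ un l' @ map (\<lambda>p. p \<in> F') (List.product [0..<a'] [0..<b'])
      = un a @ un b @ un l @ map (\<lambda>p. p \<in> F) (List.product [0..<a] [0..<b])"
    using assms(2) by (simp add: y LeftBIS_def)
  then have "l' = l"
    by (metis un_append_inj)
  then show ?thesis
    by (simp add: y LeftBIS_def)
qed

lemma red_machine_reduces:
  assumes orc: "is_oracle LeftBIS orc" and "x \<in> inst DomSet"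
  shows "\<exists>t. t \<le> par DomSet x * length (enc DomSet x) ^ 7 \<and>
    cstate (run orc red_machine (enc DomSet x) t) = halt red_machine \<and>
    read_tape (cwork (run orc red_machine (enc DomSet x) t)) = bin (sol DomSet x) \<and>
    (\<forall>i<t. cstate (run orc red_machine (enc DomSet x) i) = qry red_machine \<longrightarrow>
      (\<forall>y\<in>inst LeftBIS.
        read_tape (coracle (run orc red_machine (enc DomSet x) i)) = enc LeftBIS y \<longrightarrow>
        par LeftBIS y \<le> par DomSet x))"
proof -
  obtain n E k where x: "x = (n, E, k)" and "1 \<le> k"
    using assms(2) by (auto simp: DomSet_def)
  interpret reduction_run n k E orc .
  have enc_x: "enc DomSet x = dom_word" and par_x: "par DomSet x = k"
    and sol_x: "sol DomSet x = sol LeftBIS (n, n * n, nbhd_copies n E, k) mod 2 ^ n"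
    using card_dominating_sets_eq_mod[OF \<open>1 \<le> k\<close>, of n E]
    by (simp_all add: x dom_word_def DomSet_def LeftBIS_def)
  have query_par: "par LeftBIS y = k" if "y \<in> inst LeftBIS" "enc LeftBIS y = query_word" for y
    using that unfolding query_word_def by (rule LeftBIS_par_of_enc)
  obtain t where "t \<le> run_time"
    and run: "cstate (run orc red_machine dom_word t) = halt red_machine \<and>
      read_tape (cwork (run orc red_machine dom_word t)) = bin (sol DomSet x) \<and>
      (\<forall>i<t. cstate (run orc red_machine dom_word i) = qry red_machine \<longrightarrow>
         read_tape (coracle (run orc red_machine dom_word i)) = query_word)"
    using red_machine_run[OF orc] unfolding sol_x by blast
  moreover have "t \<le> par DomSet x * length (enc DomSet x) ^ 7"
    using \<open>t \<le> run_time\<close> run_time_bound[OF \<open>1 \<le> k\<close>] by (simp add: enc_x par_x)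
  ultimately show ?thesis
    using query_par by (auto simp: enc_x par_x)
qed

theorem theorem5:
  shows "sharpW2_hard LeftBIS"
  unfolding sharpW2_hard_def fpt_turing_red_def
  by (rule exI[of _ red_machine], rule exI[of _ id], rule exI[of _ 7], rule exI[of _ id])
    (use red_machine_reduces in \<open>auto simp: wf_red_machine computable_id\<close>)

end
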